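(* Let $n\ge 34$ be an integer and $\lambda$ a positive integer. Then there is no graphical $3$-$\left(\binom{n}{2},5,\lambda\right)$ design.
   Context: For a finite set $X$ and integer $t\ge 0$, $\binom{X}{t}$ denotes the set of $t$-subsets of $X$. A $t$-$(v,k,\lambda)$ design is a pair $(X,\mathcal{B})$ with $|X|=v$ and $\mathcal{B}\subseteq\binom{X}{k}$ (the blocks) such that every $T\in\binom{X}{t}$ is contained in exactly $\lambda$ blocks; it is moreover required that $t\ge 2$, $t<k$, $\mathcal{B}\neq\emptyset$ and $\mathcal{B}\neq\binom{X}{k}$. An automorphism of $(X,\mathcal{B})$ is a bijection $\sigma:X\to X$ with $\sigma(\mathcal{B})=\mathcal{B}$. Let $V$ be a set with $|V|=n$; the symmetric group $\mathrm{Sym}(V)$ acts on $\binom{V}{2}$ (the edge set of the complete graph $K_n$), giving a permutation group $\mathcal{S}_n^{[2]}\le \mathrm{Sym}(\binom{V}{2})$. A $t$-$(v,k,\lambda)$ design $(X,\mathcal{B})$ is graphical if $v=\binom{n}{2}$ and its automorphism group contains a subgroup that is permutation isomorphic to $\mathcal{S}_n^{[2]}$ (equivalently, one may take $X$ to be the edge set of $K_n$ and $\mathcal{B}$ a union of $\mathcal{S}_n^{[2]}$-orbits on $\binom{X}{k}$). *)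

theory Defs
  imports Main
begin

definition subsets_of_card :: "'a set \<Rightarrow> nat \<Rightarrow> 'a set set" where
  "subsets_of_card X t = {S. S \<subseteq> X \<and> card S = t}"

definition is_design :: "'a set \<Rightarrow> 'a set set \<Rightarrow> nat \<Rightarrow> nat \<Rightarrow> nat \<Rightarrow> nat \<Rightarrow> bool" where
  "is_design X B t v k lam \<longleftrightarrow>
     finite X \<and> card X = v \<and>
     B \<subseteq> subsets_of_card X k \<and>
     (\<forall>T \<in> subsets_of_card X t. card {b \<in> B. T \<subseteq> b} = lam) \<and>
     2 \<le> t \<and> t < k \<and> B \<noteq> {} \<and> B \<noteq> subsets_of_card X k"

definition is_automorphism :: "'a set \<Rightarrow> 'a set set \<Rightarrow> ('a \<Rightarrow> 'a) \<Rightarrow> bool" where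
  "is_automorphism X B f \<longleftrightarrow> bij_betw f X X \<and> (\<lambda>b. f ` b) ` B = B"

definition edges :: "'b set \<Rightarrow> 'b set set" where
  "edges V = subsets_of_card V 2"

text \<open>This says exactly that Aut(X,B) contains the subgroup
  phi S_n^[2] phi^{-1}, which is permutation isomorphic to S_n^[2].\<close>
definition graphical_wrt :: "nat \<Rightarrow> 'b set \<Rightarrow> ('b set \<Rightarrow> 'a) \<Rightarrow> 'a set \<Rightarrow> 'a set set \<Rightarrow> bool" where
  "graphical_wrt n V phi X B \<longleftrightarrow>
     finite V \<and> card V = n \<and> card X = n choose 2 \<and> bij_betw phi (edges V) X \<and>
     (\<forall>\<sigma>. bij_betw \<sigma> V V \<longrightarrow>
        is_automorphism X B (\<lambda>x. phi (\<sigma> ` (inv_into (edges V) phi x))))"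

end

theory Submission
  imports Defs "HOL.Binomial_Plus"
begin

text \<open>
  Transporting a graphical 3-(n choose 2, 5, lambda) design along its bijection with the edges
  of the complete graph gives a family F of 5-edge graphs on the vertices 0, ..., n - 1 that is
  invariant under all vertex permutations and contains every 3-edge graph in exactly lambda
  members. F is a union of isomorphism classes; let x i in {0, 1} record whether the i-th of the
  26 classes of 5-edge graphs lies in F.

  Fix a 3-edge graph T on the vertices 0, ..., t - 1. The members of F containing T are sorted by
  the set W of vertices of the two added edges outside 0, ..., t - 1; by symmetry only |W| = k
  matters, so their number is sum_k (n - t choose k) b_k, where b_k is computed by listing the
  extensions of T by two edges on 0, ..., t + k - 1 and naming the isomorphism class of each.
  For the claw, the path with a disjoint edge and the perfect matching on six vertices this
  expresses 24 lambda as sum_i x i Q_i(n) in three ways. The differences are linear relations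
  between the x i with polynomial coefficients, and for n >= 34 their signs force the x i to be
  equal one class at a time. Neither outcome is possible: all zero gives lambda = 0, and all one
  gives the complete family, through each 3-set of which pass more blocks than in any design.
\<close>

section \<open>Designs and automorphisms under bijections\<close>

lemma image_subsets_of_card:
  assumes "inj_on f X"
  shows "(`) f ` subsets_of_card X k = subsets_of_card (f ` X) k"
proof (intro equalityI subsetI)
  fix S' assume "S' \<in> (`) f ` subsets_of_card X k"
  then show "S' \<in> subsets_of_card (f ` X) k"
    using assms by (auto simp: subsets_of_card_def card_image inj_on_subset)
next
  fix S' assume S': "S' \<in> subsets_of_card (f ` X) k"
  then obtain S where "S \<subseteq> X" "S' = f ` S"
    by (auto simp: subsets_of_card_def subset_image_iff)
  with S' assms show "S' \<in> (`) f ` subsets_of_card X k"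
    by (auto simp: subsets_of_card_def card_image inj_on_subset)
qed

lemma inj_on_image_subset_iff:
  "inj_on f C \<Longrightarrow> A \<subseteq> C \<Longrightarrow> B \<subseteq> C \<Longrightarrow> f ` A \<subseteq> f ` B \<longleftrightarrow> A \<subseteq> B"
  by (blast dest: inj_onD)

lemma bij_betw_subsets_of_card:
  assumes "bij_betw f X Y"
  shows "bij_betw ((`) f) (subsets_of_card X k) (subsets_of_card Y k)"
proof -
  have "inj_on ((`) f) (subsets_of_card X k)"
    using assms inj_on_image_Pow[of f X]
    by (auto simp: bij_betw_def subsets_of_card_def intro: inj_on_subset)
  then show ?thesis
    using assms image_subsets_of_card[of f X k] by (auto simp: bij_betw_def)
qed

lemma is_design_image:
  assumes f: "bij_betw f X Y" and D: "is_design X B t v k lam"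
  shows "is_design Y ((`) f ` B) t v k lam"
proof -
  have inj: "inj_on f X" and fX: "f ` X = Y"
    using f by (auto simp: bij_betw_def)
  have injP: "inj_on ((`) f) (Pow X)"
    using inj by (rule inj_on_image_Pow)
  have B: "B \<subseteq> subsets_of_card X k" "B \<noteq> subsets_of_card X k"
    using D by (auto simp: is_design_def)
  then have BX: "B \<subseteq> Pow X"
    by (auto simp: subsets_of_card_def)
  have blocks: "(`) f ` B \<subseteq> subsets_of_card Y k"
    using B(1) image_subsets_of_card[OF inj, of k] fX by blast
  have "(`) f ` B \<noteq> (`) f ` subsets_of_card X k"
    using B BX inj_on_image_eq_iff[OF injP, of B "subsets_of_card X k"]
    by (auto simp: subsets_of_card_def)
  then have proper: "(`) f ` B \<noteq> subsets_of_card Y k"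
    using image_subsets_of_card[OF inj, of k] fX by simp
  have count: "card {b \<in> (`) f ` B. T \<subseteq> b} = lam" if T: "T \<in> subsets_of_card Y t" for T
  proof -
    obtain S where S: "S \<in> subsets_of_card X t" "T = f ` S"
      using T image_subsets_of_card[OF inj, of t] fX by blast
    have "{b \<in> (`) f ` B. T \<subseteq> b} = (`) f ` {b \<in> B. S \<subseteq> b}"
      using S BX inj by (auto simp: subsets_of_card_def inj_on_image_subset_iff)
    moreover have "card {b \<in> B. S \<subseteq> b} = lam"
      using D S(1) by (auto simp: is_design_def)
    ultimately show ?thesis
      using BX by (auto intro!: card_image inj_on_subset[OF injP])
  qed
  show ?thesis
    using D f blocks proper count
    by (auto simp: is_design_def bij_betw_finite bij_betw_same_card)
qed

lemma card_supersets_eq_card_complements: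
  assumes E: "finite E" and F: "F \<subseteq> subsets_of_card E s" and T: "T \<subseteq> E"
  shows "card {g \<in> F. T \<subseteq> g} = card {P. P \<subseteq> E - T \<and> card P = s - card T \<and> T \<union> P \<in> F}"
proof (rule bij_betw_same_card[of "\<lambda>g. g - T"], rule bij_betw_byWitness[where f' = "(\<union>) T"])
  have "finite T"
    using E T by (rule finite_subset[rotated])
  then have "card (g - T) = s - card T" if "g \<in> F" "T \<subseteq> g" for g
    using that F by (auto simp: subsets_of_card_def card_Diff_subset)
  then show "(\<lambda>g. g - T) ` {g \<in> F. T \<subseteq> g} \<subseteq> {P. P \<subseteq> E - T \<and> card P = s - card T \<and> T \<union> P \<in> F}"
    using F by (auto simp: subsets_of_card_def Un_absorb1)
qed auto

lemma card_supersets_complete: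
  assumes "finite X" "T \<in> subsets_of_card X t" "t \<le> k"
  shows "card {b \<in> subsets_of_card X k. T \<subseteq> b} = (card X - t) choose (k - t)"
proof -
  have T: "T \<subseteq> X" "card T = t" "finite T"
    using assms by (auto simp: subsets_of_card_def intro: finite_subset)
  have "T \<union> P \<in> subsets_of_card X k" if "P \<subseteq> X - T" "card P = k - t" for P
  proof -
    have "card (T \<union> P) = card T + card P"
      using that T assms(1) by (intro card_Un_disjoint) (auto intro: finite_subset)
    then show ?thesis
      using that T assms(3) by (auto simp: subsets_of_card_def)
  qed
  then have "{P. P \<subseteq> X - T \<and> card P = k - t \<and> T \<union> P \<in> subsets_of_card X k}
      = {P. P \<subseteq> X - T \<and> card P = k - t}"
    by blast
  then show ?thesis
    using card_supersets_eq_card_complements[OF assms(1) subset_refl T(1), of k]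
      n_subsets[of "X - T" "k - t"]
      assms(1) T by (simp add: card_Diff_subset)
qed

lemma design_count_less_complete:
  assumes D: "is_design X B t v k lam" and T: "T \<in> subsets_of_card X t"
  shows "lam < card {b \<in> subsets_of_card X k. T \<subseteq> b}"
proof -
  have X: "finite X" and B: "B \<subseteq> subsets_of_card X k" "B \<noteq> subsets_of_card X k" and tk: "t < k"
    and count: "\<And>T. T \<in> subsets_of_card X t \<Longrightarrow> card {b \<in> B. T \<subseteq> b} = lam"
    using D by (auto simp: is_design_def)
  have fin: "finite {b \<in> subsets_of_card X k. S \<subseteq> b}" for S
    using X by (auto simp: subsets_of_card_def intro: finite_subset[of _ "Pow X"])
  have "{b \<in> B. T \<subseteq> b} \<subseteq> {b \<in> subsets_of_card X k. T \<subseteq> b}"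
    using B(1) by blast
  from card_mono[OF fin this] have le: "lam \<le> card {b \<in> subsets_of_card X k. T \<subseteq> b}"
    using count[OF T] by simp
  show ?thesis
  proof (rule ccontr)
    assume "\<not> ?thesis"
    \<comment> \<open>both counts are the same for all t-sets, so equality at T gives equality everywhere\<close>
    then have eq: "card {b \<in> B. S \<subseteq> b} = card {b \<in> subsets_of_card X k. S \<subseteq> b}"
      if "S \<in> subsets_of_card X t" for S
      using le count[OF that] card_supersets_complete[OF X that] card_supersets_complete[OF X T] tk
      by simp
    have "subsets_of_card X k \<subseteq> B"
    proof
      fix b assume b: "b \<in> subsets_of_card X k"
      then have "t \<le> card b"
        using tk by (simp add: subsets_of_card_def)
      then obtain S where S: "S \<subseteq> b" "card S = t"
        by (rule obtain_subset_with_card_n)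
      then have S': "S \<in> subsets_of_card X t"
        using b by (auto simp: subsets_of_card_def)
      have "{b \<in> B. S \<subseteq> b} = {b \<in> subsets_of_card X k. S \<subseteq> b}"
        by (rule card_subset_eq[OF fin]) (use B(1) eq[OF S'] in auto)
      then show "b \<in> B"
        using b S by blast
    qed
    then show False
      using B by blast
  qed
qed

lemma is_automorphism_image:
  assumes g: "bij_betw g X Y" and B: "B \<subseteq> Pow X" and \<alpha>: "is_automorphism X B \<alpha>"
    and \<beta>: "bij_betw \<beta> Y Y" and comm: "\<And>x. x \<in> X \<Longrightarrow> g (\<alpha> x) = \<beta> (g x)"
  shows "is_automorphism Y ((`) g ` B) \<beta>"
proof -
  have "\<beta> ` (g ` b) = g ` (\<alpha> ` b)" if "b \<in> B" for b
    using that B comm by (force simp: image_comp subset_iff)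
  then have "(\<lambda>b. \<beta> ` b) ` ((`) g ` B) = (`) g ` ((\<lambda>b. \<alpha> ` b) ` B)"
    by (force simp: image_iff)
  then show ?thesis
    using \<alpha> \<beta> by (simp add: is_automorphism_def)
qed

section \<open>Vertex-symmetric families of graphs\<close>

lemma finite_edges: "finite A \<Longrightarrow> finite (edges A)"
  by (auto simp: edges_def subsets_of_card_def)

lemma edges_mono: "A \<subseteq> B \<Longrightarrow> edges A \<subseteq> edges B"
  by (auto simp: edges_def subsets_of_card_def)

lemma bij_betw_image_edges: "bij_betw f A B \<Longrightarrow> bij_betw ((`) f) (edges A) (edges B)"
  unfolding edges_def by (rule bij_betw_subsets_of_card)

definition vertex_symmetric :: "nat \<Rightarrow> nat set set set \<Rightarrow> bool" where
  "vertex_symmetric n F \<longleftrightarrow>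
     (\<forall>\<pi>. bij_betw \<pi> {0..<n} {0..<n} \<longrightarrow> is_automorphism (edges {0..<n}) F ((`) \<pi>))"

lemma conjugate_edge_action:
  assumes \<iota>: "bij_betw \<iota> A V" and phi: "bij_betw phi (edges V) X" and e: "e \<in> edges A"
  shows "phi ((\<iota> \<circ> \<pi> \<circ> inv_into A \<iota>) ` inv_into (edges V) phi (phi (\<iota> ` e))) = phi (\<iota> ` \<pi> ` e)"
proof -
  have "e \<subseteq> A"
    using e by (auto simp: edges_def subsets_of_card_def)
  then have "(\<iota> \<circ> \<pi> \<circ> inv_into A \<iota>) ` (\<iota> ` e) = \<iota> ` (\<pi> ` e)"
    using bij_betw_imp_inj_on[OF \<iota>] by (force simp: image_comp subset_iff)
  moreover have "\<iota> ` e \<in> edges V"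
    using e bij_betw_image_edges[OF \<iota>] by (auto simp: bij_betw_def)
  ultimately show ?thesis
    using bij_betw_imp_inj_on[OF phi] by (simp add: inv_into_f_f)
qed

lemma graphical_design_vertex_symmetric:
  assumes D: "is_design X B t v k lam" and G: "graphical_wrt n V phi X B"
  shows "\<exists>F. is_design (edges {0..<n}) F t v k lam \<and> vertex_symmetric n F"
proof -
  have bphi: "bij_betw phi (edges V) X"
    and aut: "\<And>\<sigma>. bij_betw \<sigma> V V \<Longrightarrow> is_automorphism X B (\<lambda>x. phi (\<sigma> ` inv_into (edges V) phi x))"
    using G by (auto simp: graphical_wrt_def)
  obtain \<iota> where \<iota>: "bij_betw \<iota> {0..<n} V"
    using G ex_bij_betw_nat_finite[of V] by (auto simp: graphical_wrt_def)
  define \<epsilon> where "\<epsilon> = phi \<circ> (`) \<iota>"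
  have \<epsilon>: "bij_betw \<epsilon> (edges {0..<n}) X"
    unfolding \<epsilon>_def by (rule bij_betw_trans[OF bij_betw_image_edges[OF \<iota>] bphi])
  define g where "g = inv_into (edges {0..<n}) \<epsilon>"
  have g: "bij_betw g X (edges {0..<n})"
    unfolding g_def by (rule bij_betw_inv_into[OF \<epsilon>])
  have BX: "B \<subseteq> Pow X"
    using D by (auto simp: is_design_def subsets_of_card_def)
  have "is_automorphism (edges {0..<n}) ((`) g ` B) ((`) \<pi>)" if \<pi>: "bij_betw \<pi> {0..<n} {0..<n}" for \<pi>
  proof -
    define \<sigma> where "\<sigma> = \<iota> \<circ> \<pi> \<circ> inv_into {0..<n} \<iota>"
    have "bij_betw \<sigma> V V"
      unfolding \<sigma>_def by (meson bij_betw_inv_into bij_betw_trans \<iota> \<pi>)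
    have \<pi>E: "bij_betw ((`) \<pi>) (edges {0..<n}) (edges {0..<n})"
      using \<pi> by (rule bij_betw_image_edges)
    have act: "phi (\<sigma> ` inv_into (edges V) phi (\<epsilon> e)) = \<epsilon> (\<pi> ` e)" if "e \<in> edges {0..<n}" for e
      unfolding \<sigma>_def \<epsilon>_def using conjugate_edge_action[OF \<iota> bphi that] by simp
    show ?thesis
    proof (rule is_automorphism_image[OF g BX aut[OF \<open>bij_betw \<sigma> V V\<close>] \<pi>E])
      fix x assume "x \<in> X"
      then have "g x \<in> edges {0..<n}" and x: "x = \<epsilon> (g x)"
        using \<epsilon> g by (auto simp: g_def bij_betw_def bij_betw_inv_into_right)
      moreover have "\<pi> ` g x \<in> edges {0..<n}"
        using \<pi>E calculation(1) by (auto simp: bij_betw_def)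
      ultimately show "g (phi (\<sigma> ` inv_into (edges V) phi x)) = \<pi> ` g x"
        using act by (metis g_def bij_betw_inv_into_left[OF \<epsilon>])
    qed
  qed
  then show ?thesis
    using is_design_image[OF g D] by (auto simp: vertex_symmetric_def)
qed

lemma vertex_symmetric_image_iff:
  assumes F: "vertex_symmetric n F" "F \<subseteq> Pow (edges {0..<n})"
    and \<pi>: "bij_betw \<pi> {0..<n} {0..<n}" and g: "g \<subseteq> edges {0..<n}"
  shows "(`) \<pi> ` g \<in> F \<longleftrightarrow> g \<in> F"
proof -
  have a: "is_automorphism (edges {0..<n}) F ((`) \<pi>)"
    using F(1) \<pi> by (simp add: vertex_symmetric_def)
  have inj: "inj_on ((`) ((`) \<pi>)) (Pow (edges {0..<n}))"
    using a by (auto simp: is_automorphism_def bij_betw_def intro: inj_on_image_Pow)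
  have FF: "(\<lambda>b. (`) \<pi> ` b) ` F = F"
    using a by (simp add: is_automorphism_def)
  show ?thesis
  proof
    assume "g \<in> F"
    then show "(`) \<pi> ` g \<in> F"
      using FF by blast
  next
    assume "(`) \<pi> ` g \<in> F"
    then obtain g' where "g' \<in> F" "(`) \<pi> ` g = (`) \<pi> ` g'"
      using FF by (metis imageE)
    moreover have "g = g'"
      using inj_onD[OF inj calculation(2)] g calculation(1) F(2) by blast
    ultimately show "g \<in> F"
      by simp
  qed
qed

lemma vertex_symmetric_subsets_of_card: "vertex_symmetric n (subsets_of_card (edges {0..<n}) s)"
  unfolding vertex_symmetric_def is_automorphism_def
proof (intro allI impI conjI)
  fix \<pi> assume "bij_betw \<pi> {0..<n} {0..<n}"
  then show b: "bij_betw ((`) \<pi>) (edges {0..<n}) (edges {0..<n})"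
    by (rule bij_betw_image_edges)
  show "(\<lambda>b. (`) \<pi> ` b) ` subsets_of_card (edges {0..<n}) s = subsets_of_card (edges {0..<n}) s"
    using bij_betw_subsets_of_card[OF b] by (simp add: bij_betw_def)
qed

section \<open>Counting supersets in a vertex-symmetric family\<close>

definition extensions :: "nat \<Rightarrow> nat \<Rightarrow> nat set set \<Rightarrow> nat \<Rightarrow> nat set \<Rightarrow> nat set set set" where
  "extensions n d T t W = {P. P \<subseteq> edges {0..<n} - T \<and> card P = d \<and> \<Union>P - {0..<t} = W}"

lemma card_Union_edges_le:
  assumes "P \<subseteq> edges A"
  shows "card (\<Union>P) \<le> 2 * card P"
proof -
  have "card (\<Union>P) \<le> sum card P"
    by (rule card_Union_le_sum_card)
  also have "sum card P = 2 * card P"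
    using assms by (simp add: edges_def subsets_of_card_def subset_iff)
  finally show ?thesis .
qed

lemma card_extensions_sum:
  "card {P. P \<subseteq> edges {0..<n} - T \<and> card P = d \<and> T \<union> P \<in> F}
     = (\<Sum>W \<in> {W. W \<subseteq> {t..<n} \<and> card W \<le> 2 * d}. card {P \<in> extensions n d T t W. T \<union> P \<in> F})"
proof -
  let ?Ws = "{W. W \<subseteq> {t..<n} \<and> card W \<le> 2 * d}"
  have "P \<in> (\<Union>W\<in>?Ws. {P \<in> extensions n d T t W. T \<union> P \<in> F})"
    if P: "P \<subseteq> edges {0..<n} - T" "card P = d" "T \<union> P \<in> F" for P
  proof -
    have U: "\<Union>P \<subseteq> {0..<n}"
      using P(1) by (auto simp: edges_def subsets_of_card_def)
    have "card (\<Union>P - {0..<t}) \<le> card (\<Union>P)"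
      using U by (intro card_mono) (auto intro: finite_subset)
    also have "\<dots> \<le> 2 * d"
      using card_Union_edges_le[of P "{0..<n}"] P by auto
    finally show ?thesis
      using P U by (auto simp: extensions_def)
  qed
  then have eq: "{P. P \<subseteq> edges {0..<n} - T \<and> card P = d \<and> T \<union> P \<in> F}
      = (\<Union>W\<in>?Ws. {P \<in> extensions n d T t W. T \<union> P \<in> F})"
    by (auto simp: extensions_def)
  show ?thesis
    unfolding eq
  proof (rule card_UN_disjoint)
    show "finite ?Ws"
      by (rule finite_subset[of _ "Pow {t..<n}"]) auto
    show "\<forall>W\<in>?Ws. finite {P \<in> extensions n d T t W. T \<union> P \<in> F}"
      by (auto simp: extensions_def finite_edges intro: finite_subset[of _ "Pow (edges {0..<n})"])
  qed (auto simp: extensions_def)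
qed

lemma image_edges_fixed:
  assumes "\<forall>x<t. \<sigma> x = x" and "T \<subseteq> edges {0..<t}"
  shows "(`) \<sigma> ` T = T"
proof -
  have "\<sigma> ` e = e" if "e \<in> T" for e
  proof -
    have "e \<subseteq> {0..<t}"
      using that assms(2) by (auto simp: edges_def subsets_of_card_def)
    then show ?thesis
      using assms(1) by force
  qed
  then show ?thesis
    by force
qed

lemma image_mem_extensions:
  assumes \<sigma>: "bij_betw \<sigma> {0..<n} {0..<n}" "\<forall>x<t. \<sigma> x = x"
    and T: "T \<subseteq> edges {0..<t}" and tn: "t \<le> n" and P: "P \<in> extensions n d T t W"
  shows "(`) \<sigma> ` P \<in> extensions n d T t (\<sigma> ` W)"
proof -
  have inj: "inj_on \<sigma> {0..<n}"
    using \<sigma>(1) by (rule bij_betw_imp_inj_on)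
  have be: "bij_betw ((`) \<sigma>) (edges {0..<n}) (edges {0..<n})"
    using \<sigma>(1) by (rule bij_betw_image_edges)
  have PE: "P \<subseteq> edges {0..<n}" "P \<inter> T = {}"
    using P by (auto simp: extensions_def)
  have TE: "T \<subseteq> edges {0..<n}"
    using T edges_mono[of "{0..<t}" "{0..<n}"] tn by auto
  have "(`) \<sigma> ` P \<inter> T = {}"
  proof -
    have "(`) \<sigma> ` P \<inter> (`) \<sigma> ` T = {}"
      using PE TE bij_betw_imp_inj_on[OF be] by (auto dest: inj_onD)
    moreover have "(`) \<sigma> ` T = T"
      using \<sigma>(2) T by (rule image_edges_fixed)
    ultimately show ?thesis
      by simp
  qed
  moreover have "(`) \<sigma> ` P \<subseteq> edges {0..<n}"
    using PE be by (auto simp: bij_betw_def)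
  moreover have "card ((`) \<sigma> ` P) = card P"
    using PE inj_on_subset[OF bij_betw_imp_inj_on[OF be]] by (auto intro: card_image)
  moreover have "\<Union>((`) \<sigma> ` P) - {0..<t} = \<sigma> ` (\<Union>P - {0..<t})"
  proof -
    have U: "\<Union>P \<subseteq> {0..<n}"
      using PE by (auto simp: edges_def subsets_of_card_def)
    have "\<sigma> ` {0..<t} = {0..<t}"
      using \<sigma>(2) by force
    then show ?thesis
      using inj_on_image_set_diff[OF inj, of "\<Union>P" "{0..<t}"] U tn by auto
  qed
  ultimately show ?thesis
    using P by (auto simp: extensions_def)
qed

lemma card_extensions_image_le:
  assumes F: "vertex_symmetric n F" "F \<subseteq> Pow (edges {0..<n})"
    and \<sigma>: "bij_betw \<sigma> {0..<n} {0..<n}" "\<forall>x<t. \<sigma> x = x"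
    and T: "T \<subseteq> edges {0..<t}" and tn: "t \<le> n"
  shows "card {P \<in> extensions n d T t W. T \<union> P \<in> F} \<le> card {P \<in> extensions n d T t (\<sigma> ` W). T \<union> P \<in> F}"
proof (rule card_inj_on_le[of "(`) ((`) \<sigma>)"])
  have be: "bij_betw ((`) \<sigma>) (edges {0..<n}) (edges {0..<n})"
    using \<sigma>(1) by (rule bij_betw_image_edges)
  have TE: "T \<subseteq> edges {0..<n}"
    using T edges_mono[of "{0..<t}" "{0..<n}"] tn by auto
  have fixT: "(`) \<sigma> ` T = T"
    using \<sigma>(2) T by (rule image_edges_fixed)
  show "inj_on ((`) ((`) \<sigma>)) {P \<in> extensions n d T t W. T \<union> P \<in> F}"
    by (rule inj_on_subset[OF inj_on_image_Pow[OF bij_betw_imp_inj_on[OF be]]])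
      (auto simp: extensions_def)
  show "finite {P \<in> extensions n d T t (\<sigma> ` W). T \<union> P \<in> F}"
    by (auto simp: extensions_def finite_edges intro: finite_subset[of _ "Pow (edges {0..<n})"])
  show "(`) ((`) \<sigma>) ` {P \<in> extensions n d T t W. T \<union> P \<in> F}
      \<subseteq> {P \<in> extensions n d T t (\<sigma> ` W). T \<union> P \<in> F}"
  proof (rule image_subsetI)
    fix P assume "P \<in> {P \<in> extensions n d T t W. T \<union> P \<in> F}"
    then have P: "P \<in> extensions n d T t W" "T \<union> P \<in> F"
      by simp_all
    have "T \<union> P \<subseteq> edges {0..<n}"
      using P(1) TE by (auto simp: extensions_def)
    then have "(`) \<sigma> ` (T \<union> P) \<in> F"
      using P(2) vertex_symmetric_image_iff[OF F \<sigma>(1)] by blast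
    then have "T \<union> (`) \<sigma> ` P \<in> F"
      using fixT by (simp add: image_Un)
    then show "(`) \<sigma> ` P \<in> {P \<in> extensions n d T t (\<sigma> ` W). T \<union> P \<in> F}"
      using image_mem_extensions[OF \<sigma> T tn P(1)] by blast
  qed
qed

lemma exists_perm_fixing_below:
  fixes t n :: nat
  assumes A: "A \<subseteq> {t..<n}" and B: "B \<subseteq> {t..<n}" and c: "card A = card B"
  shows "\<exists>\<sigma>. bij_betw \<sigma> {0..<n} {0..<n} \<and> (\<forall>x<t. \<sigma> x = x) \<and> \<sigma> ` A = B"
proof -
  let ?C = "{t..<n}"
  have fin: "finite A" "finite B"
    using A B by (meson finite_atLeastLessThan finite_subset)+
  obtain f where f: "bij_betw f A B"
    using finite_same_card_bij[OF fin c] by blast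
  have "card (?C - A) = card (?C - B)"
    using A B c fin by (simp add: card_Diff_subset)
  then obtain g where g: "bij_betw g (?C - A) (?C - B)"
    using finite_same_card_bij by blast
  define \<sigma> where "\<sigma> x = (if x \<in> A then f x else if x \<in> ?C then g x else x)" for x
  have "bij_betw \<sigma> A B"
    using f by (rule bij_betw_cong[THEN iffD1, rotated]) (simp add: \<sigma>_def)
  moreover have "bij_betw \<sigma> (?C - A) (?C - B)"
    using g by (rule bij_betw_cong[THEN iffD1, rotated]) (simp add: \<sigma>_def)
  moreover have "bij_betw \<sigma> {0..<min t n} {0..<min t n}"
    using bij_betw_id by (rule bij_betw_cong[THEN iffD1, rotated]) (use A in \<open>auto simp: \<sigma>_def\<close>)
  ultimately have "bij_betw \<sigma> (A \<union> (?C - A) \<union> {0..<min t n}) (B \<union> (?C - B) \<union> {0..<min t n})"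
    using B by (intro bij_betw_combine) auto
  moreover have "A \<union> (?C - A) \<union> {0..<min t n} = {0..<n}" "B \<union> (?C - B) \<union> {0..<min t n} = {0..<n}"
    using A B by auto
  moreover have "\<forall>x<t. \<sigma> x = x"
    using A by (auto simp: \<sigma>_def)
  moreover have "\<sigma> ` A = B"
    using \<open>bij_betw \<sigma> A B\<close> by (simp add: bij_betw_def)
  ultimately show ?thesis
    by auto
qed

lemma card_extensions_initial_segment:
  assumes F: "vertex_symmetric n F" "F \<subseteq> Pow (edges {0..<n})"
    and T: "T \<subseteq> edges {0..<t}" and W: "W \<subseteq> {t..<n}" "t + card W \<le> n"
  shows "card {P \<in> extensions n d T t W. T \<union> P \<in> F}
    = card {P \<in> extensions n d T t {t..<t + card W}. T \<union> P \<in> F}"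
proof -
  let ?A = "{t..<t + card W}"
  have A: "?A \<subseteq> {t..<n}" "card ?A = card W"
    using W by auto
  obtain \<sigma> where \<sigma>: "bij_betw \<sigma> {0..<n} {0..<n}" "\<forall>x<t. \<sigma> x = x" "\<sigma> ` ?A = W"
    using exists_perm_fixing_below[OF A(1) W(1) A(2)] by blast
  obtain \<tau> where \<tau>: "bij_betw \<tau> {0..<n} {0..<n}" "\<forall>x<t. \<tau> x = x" "\<tau> ` W = ?A"
    using exists_perm_fixing_below[OF W(1) A(1) A(2)[symmetric]] by blast
  show ?thesis
    using card_extensions_image_le[OF F \<sigma>(1,2) T, where d = d and W = ?A]
      card_extensions_image_le[OF F \<tau>(1,2) T, where d = d and W = W] \<sigma>(3) \<tau>(3) W
    by simp
qed

lemma card_supersets_sum: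
  assumes F: "F \<subseteq> subsets_of_card (edges {0..<n}) s" "vertex_symmetric n F"
    and T: "T \<subseteq> edges {0..<t}" and tn: "t + 2 * (s - card T) \<le> n"
  shows "card {g \<in> F. T \<subseteq> g}
    = (\<Sum>k \<le> 2 * (s - card T).
         (n - t choose k) * card {P \<in> extensions n (s - card T) T t {t..<t+k}. T \<union> P \<in> F})"
proof -
  define d where "d = s - card T"
  let ?c = "\<lambda>W. card {P \<in> extensions n d T t W. T \<union> P \<in> F}"
  let ?Ws = "{W. W \<subseteq> {t..<n} \<and> card W \<le> 2 * d}"
  have FE: "F \<subseteq> Pow (edges {0..<n})"
    using F(1) by (auto simp: subsets_of_card_def)
  have TE: "T \<subseteq> edges {0..<n}"
    using T edges_mono[of "{0..<t}" "{0..<n}"] tn by auto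
  have "card {g \<in> F. T \<subseteq> g} = (\<Sum>W\<in>?Ws. ?c W)"
    using card_supersets_eq_card_complements[OF finite_edges F(1) TE] card_extensions_sum
    by (simp add: d_def)
  also have "\<dots> = (\<Sum>W\<in>?Ws. ?c {t..<t + card W})"
  proof (rule sum.cong[OF refl])
    fix W assume "W \<in> ?Ws"
    then show "?c W = ?c {t..<t + card W}"
      using tn by (intro card_extensions_initial_segment[OF F(2) FE T]) (auto simp: d_def)
  qed
  also have "\<dots> = (\<Sum>k\<le>2 * d. \<Sum>W\<in>{W \<in> ?Ws. card W = k}. ?c {t..<t + card W})"
    by (rule sum.group[symmetric]) (auto intro: finite_subset[of _ "Pow {t..<n}"])
  also have "\<dots> = (\<Sum>k\<le>2 * d. (n - t choose k) * ?c {t..<t+k})"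
  proof (rule sum.cong[OF refl])
    fix k assume "k \<in> {..2 * d}"
    then have "{W \<in> ?Ws. card W = k} = {W. W \<subseteq> {t..<n} \<and> card W = k}"
      by auto
    then show "(\<Sum>W\<in>{W \<in> ?Ws. card W = k}. ?c {t..<t + card W}) = (n - t choose k) * ?c {t..<t+k}"
      using n_subsets[of "{t..<n}" k] by simp
  qed
  finally show ?thesis
    by (simp add: d_def)
qed

section \<open>Enumerating the extensions by two edges\<close>

fun pairs_of :: "'a list \<Rightarrow> ('a \<times> 'a) list" where
  "pairs_of [] = []"
| "pairs_of (x # xs) = map (Pair x) xs @ pairs_of xs"

lemma set_pairs_of_subset: "set (pairs_of xs) \<subseteq> set xs \<times> set xs"
  by (induction xs) auto

lemma pairs_of_complete:
  "x \<in> set xs \<Longrightarrow> y \<in> set xs \<Longrightarrow> x \<noteq> y \<Longrightarrow> (x, y) \<in> set (pairs_of xs) \<or> (y, x) \<in> set (pairs_of xs)"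
  by (induction xs) auto

lemma pairs_of_distinct_components: "distinct xs \<Longrightarrow> (x, y) \<in> set (pairs_of xs) \<Longrightarrow> x \<noteq> y"
  by (induction xs) (auto dest: set_pairs_of_subset[THEN subsetD])

lemma pairs_of_asym: "distinct xs \<Longrightarrow> (x, y) \<in> set (pairs_of xs) \<Longrightarrow> (y, x) \<notin> set (pairs_of xs)"
  by (induction xs) (auto dest: set_pairs_of_subset[THEN subsetD])

lemma distinct_pairs_of: "distinct xs \<Longrightarrow> distinct (pairs_of xs)"
  by (induction xs) (auto simp: distinct_map inj_on_def dest: set_pairs_of_subset[THEN subsetD])

lemma pairs_of_two_subsets:
  assumes "distinct xs"
  shows "(\<lambda>q. {fst q, snd q}) ` set (pairs_of xs) = subsets_of_card (set xs) 2"
proof (intro equalityI subsetI)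
  fix S assume "S \<in> (\<lambda>q. {fst q, snd q}) ` set (pairs_of xs)"
  then show "S \<in> subsets_of_card (set xs) 2"
    using assms set_pairs_of_subset pairs_of_distinct_components
    by (fastforce simp: subsets_of_card_def)
next
  fix S assume "S \<in> subsets_of_card (set xs) 2"
  then obtain x y where "S = {x, y}" "x \<noteq> y" "x \<in> set xs" "y \<in> set xs"
    by (auto simp: subsets_of_card_def card_2_iff)
  then show "S \<in> (\<lambda>q. {fst q, snd q}) ` set (pairs_of xs)"
    using pairs_of_complete[of x xs y] by (force simp: insert_commute)
qed

lemma inj_on_pairs_of:
  assumes "distinct xs"
  shows "inj_on (\<lambda>q. {fst q, snd q}) (set (pairs_of xs))"
proof (rule inj_onI)
  fix q r assume q: "q \<in> set (pairs_of xs)" and r: "r \<in> set (pairs_of xs)"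
    and "{fst q, snd q} = {fst r, snd r}"
  then have "q = r \<or> (fst q = snd r \<and> snd q = fst r)"
    by (auto simp: doubleton_eq_iff prod_eq_iff)
  then show "q = r"
    using pairs_of_asym[OF assms, of "fst q" "snd q"] q r by auto
qed

fun pairs_filter :: "('a \<times> 'a \<Rightarrow> bool) \<Rightarrow> 'a list \<Rightarrow> ('a \<times> 'a) list" where
  "pairs_filter P [] = []"
| "pairs_filter P (x # xs) = map (Pair x) (filter (\<lambda>y. P (x, y)) xs) @ pairs_filter P xs"

lemma pairs_filter_eq: "pairs_filter P xs = filter P (pairs_of xs)"
  by (induction xs) (auto simp: filter_map o_def)

definition edge_of :: "nat \<times> nat \<Rightarrow> nat set" where
  "edge_of e = {fst e, snd e}"

definition graph_of :: "(nat \<times> nat) list \<Rightarrow> nat set set" where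
  "graph_of l = edge_of ` set l"

definition increasing_pairs :: "(nat \<times> nat) list \<Rightarrow> bool" where
  "increasing_pairs l \<longleftrightarrow> (\<forall>e \<in> set l. fst e < snd e)"

definition pairs_below :: "nat \<Rightarrow> (nat \<times> nat) list" where
  "pairs_below m = concat (map (\<lambda>b. map (\<lambda>a. (a, b)) [0..<b]) [0..<m])"

lemma set_pairs_below: "set (pairs_below m) = {(a, b). a < b \<and> b < m}"
  by (auto simp: pairs_below_def)

lemma distinct_pairs_below: "distinct (pairs_below m)"
  unfolding pairs_below_def by (induction m) (auto simp: distinct_map inj_on_def)

lemma inj_on_edge_of: "inj_on edge_of {e. fst e < snd e}"
  by (auto simp: inj_on_def edge_of_def doubleton_eq_iff prod_eq_iff)

lemma edge_of_pairs_below: "edge_of ` set (pairs_below m) = edges {0..<m}"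
proof (intro equalityI subsetI)
  fix e assume "e \<in> edges {0..<m}"
  then obtain x y where "e = {x, y}" "x \<noteq> y" "x < m" "y < m"
    by (auto simp: edges_def subsets_of_card_def card_2_iff)
  then have "e = edge_of (min x y, max x y)" "(min x y, max x y) \<in> set (pairs_below m)"
    by (auto simp: edge_of_def set_pairs_below min_def max_def)
  then show "e \<in> edge_of ` set (pairs_below m)"
    by blast
qed (auto simp: set_pairs_below edge_of_def edges_def subsets_of_card_def)

lemma card_graph_of: "increasing_pairs l \<Longrightarrow> distinct l \<Longrightarrow> card (graph_of l) = length l"
  unfolding graph_of_def increasing_pairs_def
  by (subst card_image) (auto intro: inj_on_subset[OF inj_on_edge_of] simp: distinct_card)

lemma graph_of_subset_edges:
  "increasing_pairs l \<Longrightarrow> \<forall>e \<in> set l. snd e < n \<Longrightarrow> graph_of l \<subseteq> edges {0..<n}"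
  by (force simp: increasing_pairs_def graph_of_def edge_of_def edges_def subsets_of_card_def)

definition pair_graph :: "(nat \<times> nat) \<times> (nat \<times> nat) \<Rightarrow> nat set set" where
  "pair_graph q = {edge_of (fst q), edge_of (snd q)}"

definition covers :: "nat \<Rightarrow> nat \<Rightarrow> (nat \<times> nat) \<times> (nat \<times> nat) \<Rightarrow> bool" where
  "covers t k q \<longleftrightarrow>
     list_all (\<lambda>v. v = fst (fst q) \<or> v = snd (fst q) \<or> v = fst (snd q) \<or> v = snd (snd q)) [t..<t+k]"

lemma covers_iff: "covers t k q \<longleftrightarrow> {t..<t+k} \<subseteq> \<Union>(pair_graph q)"
  by (auto simp: covers_def list_all_iff pair_graph_def edge_of_def)

definition extension_pairs :: "(nat \<times> nat) list \<Rightarrow> nat \<Rightarrow> nat \<Rightarrow> ((nat \<times> nat) \<times> (nat \<times> nat)) list" where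
  "extension_pairs T t k = pairs_filter (covers t k) (filter (\<lambda>e. e \<notin> set T) (pairs_below (t + k)))"

lemma extensions_initial_segment:
  assumes "t + k \<le> n"
  shows "extensions n d T t {t..<t+k} = {P \<in> subsets_of_card (edges {0..<t+k} - T) d. {t..<t+k} \<subseteq> \<Union>P}"
proof -
  have U: "U \<subseteq> {0..<n} \<and> U - {0..<t} = {t..<t+k} \<longleftrightarrow> U \<subseteq> {0..<t+k} \<and> {t..<t+k} \<subseteq> U" for U
    using assms by (auto simp: set_eq_iff subset_iff)
  have E: "P \<subseteq> edges A - T \<longleftrightarrow> (\<forall>e \<in> P. card e = 2) \<and> \<Union>P \<subseteq> A \<and> P \<inter> T = {}" for P A
    by (auto simp: edges_def subsets_of_card_def)
  show ?thesis
  proof (intro equalityI subsetI)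
    fix P assume "P \<in> extensions n d T t {t..<t+k}"
    then have P: "\<forall>e \<in> P. card e = 2" "P \<inter> T = {}" "card P = d"
      and "\<Union>P \<subseteq> {0..<n}" "\<Union>P - {0..<t} = {t..<t+k}"
      by (simp_all add: extensions_def E)
    then have "\<Union>P \<subseteq> {0..<t+k}" "{t..<t+k} \<subseteq> \<Union>P"
      using U[of "\<Union>P"] by simp_all
    with P show "P \<in> {P \<in> subsets_of_card (edges {0..<t+k} - T) d. {t..<t+k} \<subseteq> \<Union>P}"
      by (simp add: subsets_of_card_def E)
  next
    fix P assume "P \<in> {P \<in> subsets_of_card (edges {0..<t+k} - T) d. {t..<t+k} \<subseteq> \<Union>P}"
    then have P: "\<forall>e \<in> P. card e = 2" "P \<inter> T = {}" "card P = d"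
      and "\<Union>P \<subseteq> {0..<t+k}" "{t..<t+k} \<subseteq> \<Union>P"
      by (simp_all add: subsets_of_card_def E)
    then have "\<Union>P \<subseteq> {0..<n}" "\<Union>P - {0..<t} = {t..<t+k}"
      using U[of "\<Union>P"] by simp_all
    with P show "P \<in> extensions n d T t {t..<t+k}"
      by (simp add: extensions_def E)
  qed
qed

lemma edges_diff_graph_of:
  assumes "increasing_pairs T"
  shows "edges {0..<m} - graph_of T = edge_of ` set (filter (\<lambda>e. e \<notin> set T) (pairs_below m))"
proof -
  have "edge_of ` (set (pairs_below m) - set T) = edge_of ` set (pairs_below m) - edge_of ` set T"
    using assms by (intro inj_on_image_set_diff[OF inj_on_edge_of])
      (auto simp: set_pairs_below increasing_pairs_def)
  moreover have "set (filter (\<lambda>e. e \<notin> set T) (pairs_below m)) = set (pairs_below m) - set T"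
    by auto
  ultimately show ?thesis
    by (simp add: edge_of_pairs_below graph_of_def)
qed

lemma extension_pairs_correct:
  assumes T: "increasing_pairs T" and tk: "t + k \<le> n"
  shows "extensions n 2 (graph_of T) t {t..<t+k} = pair_graph ` set (extension_pairs T t k)"
    and "inj_on pair_graph (set (extension_pairs T t k))"
proof -
  define L where "L = filter (\<lambda>e. e \<notin> set T) (pairs_below (t + k))"
  have L: "distinct L" "set L \<subseteq> {e. fst e < snd e}"
    by (auto simp: L_def distinct_pairs_below set_pairs_below)
  have pg: "pair_graph = (`) edge_of \<circ> (\<lambda>q. {fst q, snd q})"
    by (auto simp: pair_graph_def)
  have inj: "inj_on pair_graph (set (pairs_of L))"
    unfolding pg
  proof (rule comp_inj_on[OF inj_on_pairs_of[OF L(1)]])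
    show "inj_on ((`) edge_of) ((\<lambda>q. {fst q, snd q}) ` set (pairs_of L))"
      using L(2) set_pairs_of_subset[of L]
      by (intro inj_on_subset[OF inj_on_image_Pow[OF inj_on_edge_of]]) auto
  qed
  have "pair_graph ` set (pairs_of L) = (`) edge_of ` subsets_of_card (set L) 2"
    unfolding pg image_comp[symmetric] pairs_of_two_subsets[OF L(1)] ..
  also have "\<dots> = subsets_of_card (edges {0..<t+k} - graph_of T) 2"
    using image_subsets_of_card[OF inj_on_subset[OF inj_on_edge_of L(2)]]
    by (simp add: edges_diff_graph_of[OF T] L_def)
  finally have "extensions n 2 (graph_of T) t {t..<t+k}
      = {P \<in> pair_graph ` set (pairs_of L). {t..<t+k} \<subseteq> \<Union>P}"
    by (simp add: extensions_initial_segment[OF tk])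
  also have "\<dots> = pair_graph ` set (extension_pairs T t k)"
    by (auto simp: extension_pairs_def pairs_filter_eq L_def covers_iff)
  finally show "extensions n 2 (graph_of T) t {t..<t+k} = pair_graph ` set (extension_pairs T t k)" .
  show "inj_on pair_graph (set (extension_pairs T t k))"
    using inj by (rule inj_on_subset) (auto simp: extension_pairs_def pairs_filter_eq L_def)
qed

lemma card_extensions_eq_length:
  assumes "increasing_pairs T" "t + k \<le> n"
  shows "card {P \<in> extensions n 2 (graph_of T) t {t..<t+k}. graph_of T \<union> P \<in> F}
    = length (filter (\<lambda>q. graph_of T \<union> pair_graph q \<in> F) (extension_pairs T t k))"
proof -
  let ?Q = "filter (\<lambda>q. graph_of T \<union> pair_graph q \<in> F) (extension_pairs T t k)"
  have "{P \<in> extensions n 2 (graph_of T) t {t..<t+k}. graph_of T \<union> P \<in> F} = pair_graph ` set ?Q"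
    using extension_pairs_correct(1)[OF assms] by auto
  also have "card \<dots> = card (set ?Q)"
    by (rule card_image[OF inj_on_subset[OF extension_pairs_correct(2)[OF assms]]]) auto
  also have "\<dots> = length ?Q"
    by (rule distinct_card)
      (simp add: extension_pairs_def pairs_filter_eq distinct_pairs_of distinct_pairs_below)
  finally show ?thesis .
qed

section \<open>Isomorphism witnesses\<close>

definition perm_of :: "nat list \<Rightarrow> nat \<Rightarrow> nat" where
  "perm_of p x = (if x < length p then p ! x else x)"

lemma bij_betw_perm_of:
  assumes p: "distinct p" "set p \<subseteq> {0..<length p}" and n: "length p \<le> n"
  shows "bij_betw (perm_of p) {0..<n} {0..<n}"
proof -
  have "set p = {0..<length p}"
    using p by (intro card_subset_eq) (simp_all add: distinct_card)
  then have "bij_betw ((!) p) {0..<length p} {0..<length p}"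
    using bij_betw_nth[OF p(1)] by (simp add: atLeast0LessThan)
  then have "bij_betw (perm_of p) {0..<length p} {0..<length p}"
    by (rule bij_betw_cong[THEN iffD1, rotated]) (simp add: perm_of_def)
  moreover have "bij_betw (perm_of p) {length p..<n} {length p..<n}"
    using bij_betw_id by (rule bij_betw_cong[THEN iffD1, rotated]) (simp add: perm_of_def)
  ultimately have "bij_betw (perm_of p)
      ({0..<length p} \<union> {length p..<n}) ({0..<length p} \<union> {length p..<n})"
    by (rule bij_betw_combine) auto
  moreover have "{0..<length p} \<union> {length p..<n} = {0..<n}"
    using n by auto
  ultimately show ?thesis
    by simp
qed

definition sort_pair :: "nat \<times> nat \<Rightarrow> nat \<times> nat" where
  "sort_pair e = (min (fst e) (snd e), max (fst e) (snd e))"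

lemma edge_of_sort_pair: "edge_of (sort_pair e) = edge_of e"
  by (auto simp: edge_of_def sort_pair_def min_def max_def)

definition relabel_pairs :: "nat list \<Rightarrow> (nat \<times> nat) list \<Rightarrow> (nat \<times> nat) list" where
  "relabel_pairs p l = map (\<lambda>e. sort_pair (perm_of p (fst e), perm_of p (snd e))) l"

lemma graph_of_relabel_pairs: "graph_of (relabel_pairs p l) = (`) (perm_of p) ` graph_of l"
proof -
  have "edge_of (sort_pair (perm_of p (fst e), perm_of p (snd e))) = perm_of p ` edge_of e" for e
    by (subst edge_of_sort_pair) (simp add: edge_of_def)
  then show ?thesis
    by (simp add: graph_of_def relabel_pairs_def image_image)
qed

definition same_set :: "'a list \<Rightarrow> 'a list \<Rightarrow> bool" where
  "same_set xs ys \<longleftrightarrow> list_all (\<lambda>x. x \<in> set ys) xs \<and> list_all (\<lambda>y. y \<in> set xs) ys"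

lemma same_set_iff: "same_set xs ys \<longleftrightarrow> set xs = set ys"
  by (auto simp: same_set_def list_all_iff)

definition witness_ok ::
    "(nat \<times> nat) list list \<Rightarrow> (nat \<times> nat) list \<Rightarrow> (nat \<times> nat) \<times> (nat \<times> nat) \<Rightarrow> nat \<times> nat list \<Rightarrow> bool" where
  "witness_ok G T q w \<longleftrightarrow> (case w of (i, p) \<Rightarrow>
     i < length G \<and> distinct p \<and> list_all (\<lambda>x. x < length p) p \<and>
     same_set (relabel_pairs p (G ! i)) (map sort_pair (fst q # snd q # T)))"

lemma witness_ok_image:
  assumes "witness_ok G T q (i, p)"
  shows "(`) (perm_of p) ` graph_of (G ! i) = graph_of T \<union> pair_graph q"
proof -
  have "set (relabel_pairs p (G ! i)) = set (map sort_pair (fst q # snd q # T))"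
    using assms by (simp only: witness_ok_def same_set_iff prod.case)
  then have "graph_of (relabel_pairs p (G ! i)) = graph_of (map sort_pair (fst q # snd q # T))"
    by (simp only: graph_of_def)
  then have "(`) (perm_of p) ` graph_of (G ! i) = graph_of (map sort_pair (fst q # snd q # T))"
    by (simp only: graph_of_relabel_pairs)
  also have "\<dots> = graph_of T \<union> pair_graph q"
    by (auto simp: graph_of_def pair_graph_def image_image edge_of_sort_pair)
  finally show ?thesis .
qed

lemma witness_ok_mem_iff:
  assumes F: "vertex_symmetric n F" "F \<subseteq> Pow (edges {0..<n})"
    and w: "witness_ok G T q (i, p)" "length p \<le> n" and G: "graph_of (G ! i) \<subseteq> edges {0..<n}"
  shows "graph_of T \<union> pair_graph q \<in> F \<longleftrightarrow> graph_of (G ! i) \<in> F"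
proof -
  have "bij_betw (perm_of p) {0..<n} {0..<n}"
    using w by (intro bij_betw_perm_of) (auto simp: witness_ok_def list_all_iff)
  then have "(`) (perm_of p) ` graph_of (G ! i) \<in> F \<longleftrightarrow> graph_of (G ! i) \<in> F"
    by (rule vertex_symmetric_image_iff[OF F _ G])
  then show ?thesis
    using witness_ok_image[OF w(1)] by simp
qed

lemma length_filter_witnessed:
  assumes F: "vertex_symmetric n F" "F \<subseteq> Pow (edges {0..<n})"
    and ws: "list_all2 (witness_ok G T) qs ws" "\<forall>w \<in> set ws. length (snd w) \<le> n"
    and G: "\<forall>i < length G. graph_of (G ! i) \<subseteq> edges {0..<n}"
  shows "int (length (filter (\<lambda>q. graph_of T \<union> pair_graph q \<in> F) qs))
    = (\<Sum>i < length G. int (count_list (map fst ws) i) * of_bool (graph_of (G ! i) \<in> F))"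
  using ws
proof (induction rule: list_all2_induct)
  case (Cons q qs w ws)
  obtain i p where w: "w = (i, p)"
    by fastforce
  have i: "i < length G"
    using Cons.hyps(1) by (simp add: w witness_ok_def)
  have mem: "graph_of T \<union> pair_graph q \<in> F \<longleftrightarrow> graph_of (G ! i) \<in> F"
    using witness_ok_mem_iff[OF F, of G T q i p] Cons.hyps(1) Cons.prems G i by (simp add: w)
  have "int (count_list (map fst (w # ws)) j) * of_bool (graph_of (G ! j) \<in> F)
      = int (count_list (map fst ws) j) * of_bool (graph_of (G ! j) \<in> F)
        + (if j = i then of_bool (graph_of (G ! j) \<in> F) else 0)" for j
    by (simp add: w distrib_right)
  then have "(\<Sum>j < length G. int (count_list (map fst (w # ws)) j) * of_bool (graph_of (G ! j) \<in> F))
      = (\<Sum>j < length G. int (count_list (map fst ws) j) * of_bool (graph_of (G ! j) \<in> F))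
        + (\<Sum>j < length G. if j = i then of_bool (graph_of (G ! j) \<in> F) else 0)"
    by (simp only: sum.distrib)
  also have "(\<Sum>j < length G. if j = i then of_bool (graph_of (G ! j) \<in> F) else 0)
      = (of_bool (graph_of (G ! i) \<in> F) :: int)"
    using i by (simp add: sum.delta)
  finally show ?case
    using Cons mem by simp
qed simp

section \<open>Integer polynomials as coefficient lists\<close>

fun horner :: "int list \<Rightarrow> int \<Rightarrow> int" where
  "horner [] m = 0"
| "horner (c # cs) m = c + m * horner cs m"

fun coeffs_add :: "int list \<Rightarrow> int list \<Rightarrow> int list" where
  "coeffs_add [] ys = ys"
| "coeffs_add xs [] = xs"
| "coeffs_add (x # xs) (y # ys) = (x + y) # coeffs_add xs ys"

fun coeffs_mult :: "int list \<Rightarrow> int list \<Rightarrow> int list" where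
  "coeffs_mult [] q = []"
| "coeffs_mult (a # p) q = coeffs_add (map ((*) a) q) (0 # coeffs_mult p q)"

definition coeffs_sum :: "int list list \<Rightarrow> int list" where
  "coeffs_sum vs = foldr coeffs_add vs []"

lemma horner_coeffs_add [simp]: "horner (coeffs_add xs ys) m = horner xs m + horner ys m"
  by (induction xs ys rule: coeffs_add.induct) (auto simp: algebra_simps)

lemma horner_smult [simp]: "horner (map ((*) c) v) m = c * horner v m"
  by (induction v) (auto simp: algebra_simps)

lemma horner_uminus [simp]: "horner (map uminus v) m = - horner v m"
  by (induction v) auto

lemma horner_coeffs_mult [simp]: "horner (coeffs_mult p q) m = horner p m * horner q m"
  by (induction p) (auto simp: algebra_simps)

lemma horner_coeffs_sum [simp]: "horner (coeffs_sum vs) m = (\<Sum>v \<leftarrow> vs. horner v m)"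
  by (induction vs) (auto simp: coeffs_sum_def)

text \<open>Coefficients in m of 24 * (m + c choose k) for k \<le> 4; the factor [24, 24, 12, 4, 1] ! k is
  24 / fact k.\<close>

definition binomial_coeffs :: "int \<Rightarrow> nat \<Rightarrow> int list" where
  "binomial_coeffs c k =
     map ((*) ([24, 24, 12, 4, 1] ! k)) (foldr coeffs_mult (map (\<lambda>j. [c - int j, 1]) [0..<k]) [1])"

lemma horner_binomial_coeffs:
  assumes k: "k \<le> 4" and a: "m + c = int a"
  shows "horner (binomial_coeffs c k) m = 24 * int (a choose k)"
proof -
  have "horner (foldr coeffs_mult (map (\<lambda>j. [c - int j, 1]) js) [1]) m = (\<Prod>j \<leftarrow> js. int a - int j)" for js
    by (induction js) (auto simp: a[symmetric] algebra_simps)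
  then have "horner (binomial_coeffs c k) m = [24, 24, 12, 4, 1] ! k * (\<Prod>j = 0..<k. int a - int j)"
    by (simp add: binomial_coeffs_def prod.distinct_set_conv_list[symmetric])
  also have "\<dots> = [24, 24, 12, 4, 1] ! k * fact k * int (a choose k)"
    by (simp add: int_binomial gbinomial_int_mult_fact)
  also have "[24, 24, 12, 4, 1] ! k * fact k = (24 :: int)"
    using k by (auto simp: le_Suc_eq numeral_eq_Suc fact_numeral)
  finally show ?thesis .
qed

definition nonneg_coeffs :: "int list \<Rightarrow> bool" where
  "nonneg_coeffs v \<longleftrightarrow> list_all (\<lambda>c. 0 \<le> c) v"

definition pos_coeffs :: "int list \<Rightarrow> bool" where
  "pos_coeffs v \<longleftrightarrow> (case v of [] \<Rightarrow> False | c # cs \<Rightarrow> 0 < c \<and> nonneg_coeffs cs)"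

lemma horner_nonneg: "0 \<le> m \<Longrightarrow> nonneg_coeffs v \<Longrightarrow> 0 \<le> horner v m"
  by (induction v) (auto simp: nonneg_coeffs_def)

lemma horner_pos: "0 \<le> m \<Longrightarrow> pos_coeffs v \<Longrightarrow> 0 < horner v m"
  by (cases v) (auto simp: pos_coeffs_def add_pos_nonneg horner_nonneg)

section \<open>Eliminating unknowns from polynomial identities\<close>

definition sign_definite :: "int list list \<Rightarrow> nat list \<Rightarrow> bool" where
  "sign_definite d L \<longleftrightarrow> list_all (\<lambda>i. nonneg_coeffs (d ! i) \<or> nonneg_coeffs (map uminus (d ! i))) L"

definition neg_part :: "int list list \<Rightarrow> nat list \<Rightarrow> int list" where
  "neg_part d L = coeffs_sum (map (\<lambda>i. if nonneg_coeffs (d ! i) then [] else d ! i) L)"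

definition pos_part :: "int list list \<Rightarrow> nat list \<Rightarrow> int list" where
  "pos_part d L = coeffs_sum (map (\<lambda>i. if nonneg_coeffs (d ! i) then d ! i else []) L)"

lemma horner_part_bounds:
  assumes m: "0 \<le> m" and x: "\<forall>i. x i = 0 \<or> x i = 1" and d: "sign_definite d L"
  shows "horner (neg_part d L) m \<le> (\<Sum>i \<leftarrow> L. x i * horner (d ! i) m)"
    and "(\<Sum>i \<leftarrow> L. x i * horner (d ! i) m) \<le> horner (pos_part d L) m"
proof -
  have "horner (neg_part d L) m \<le> (\<Sum>i \<leftarrow> L. x i * horner (d ! i) m)
      \<and> (\<Sum>i \<leftarrow> L. x i * horner (d ! i) m) \<le> horner (pos_part d L) m"
    using d
  proof (induction L)
    case (Cons i L)
    have "0 \<le> horner (d ! i) m" if "nonneg_coeffs (d ! i)"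
      using horner_nonneg[OF m that] .
    moreover have "horner (d ! i) m \<le> 0" if "nonneg_coeffs (map uminus (d ! i))"
      using horner_nonneg[OF m that] by simp
    ultimately show ?case
      using Cons x[rule_format, of i] by (auto simp: sign_definite_def neg_part_def pos_part_def)
  qed (simp add: neg_part_def pos_part_def coeffs_sum_def)
  then show "horner (neg_part d L) m \<le> (\<Sum>i \<leftarrow> L. x i * horner (d ! i) m)"
    and "(\<Sum>i \<leftarrow> L. x i * horner (d ! i) m) \<le> horner (pos_part d L) m"
    by simp_all
qed

text \<open>Coefficientwise certificate that c + (\<Sum>i \<leftarrow> L. x i * d ! i) has no root m \<ge> 0
  for any 0/1 vector x.\<close>

definition not_cancellable :: "int list list \<Rightarrow> nat list \<Rightarrow> int list \<Rightarrow> bool" where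
  "not_cancellable d L c \<longleftrightarrow>
     pos_coeffs (coeffs_add c (neg_part d L)) \<or> pos_coeffs (map uminus (coeffs_add c (pos_part d L)))"

lemma not_cancellable_nonzero:
  assumes "0 \<le> m" "\<forall>i. x i = 0 \<or> x i = 1" "sign_definite d L" "not_cancellable d L c"
  shows "horner c m + (\<Sum>i \<leftarrow> L. x i * horner (d ! i) m) \<noteq> 0"
  using assms horner_pos[OF assms(1), of "coeffs_add c (neg_part d L)"]
    horner_pos[OF assms(1), of "map uminus (coeffs_add c (pos_part d L))"]
    horner_part_bounds[OF assms(1-3)]
  by (auto simp: not_cancellable_def)

definition other_indices :: "nat \<Rightarrow> nat list \<Rightarrow> nat \<Rightarrow> nat list" where
  "other_indices N K b = filter (\<lambda>i. i \<notin> set K \<and> i \<noteq> b) [0..<N]"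

text \<open>If x b differed from the common value of the x i with i in K, then either the d ! i with i in K
  together or d ! b alone would be cancelled by the remaining terms.\<close>

definition elimination_step :: "nat \<Rightarrow> int list list \<Rightarrow> nat list \<Rightarrow> nat \<Rightarrow> bool" where
  "elimination_step N d K b \<longleftrightarrow>
     b < N \<and> b \<notin> set K \<and> distinct K \<and> list_all (\<lambda>i. i < N) K \<and>
     sign_definite d (other_indices N K b) \<and>
     not_cancellable d (other_indices N K b) (coeffs_sum (map ((!) d) K)) \<and>
     not_cancellable d (other_indices N K b) (d ! b)"

lemma sum_split_elimination:
  fixes f :: "nat \<Rightarrow> int"
  assumes "elimination_step N d K b"
  shows "(\<Sum>i<N. f i) = (\<Sum>i \<leftarrow> K. f i) + f b + (\<Sum>i \<leftarrow> other_indices N K b. f i)"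
proof -
  have K: "b < N" "b \<notin> set K" "distinct K" "set K \<subseteq> {..<N}"
    using assms by (auto simp: elimination_step_def list_all_iff)
  have U: "{..<N} = set K \<union> insert b (set (other_indices N K b))"
    using K by (auto simp: other_indices_def)
  have "(\<Sum>i<N. f i) = sum f (set K) + sum f (insert b (set (other_indices N K b)))"
    unfolding U by (rule sum.union_disjoint) (use K in \<open>auto simp: other_indices_def\<close>)
  also have "sum f (insert b (set (other_indices N K b))) = f b + sum f (set (other_indices N K b))"
    by (rule sum.insert) (auto simp: other_indices_def)
  finally show ?thesis
    using K by (simp add: sum_list_distinct_conv_sum_set other_indices_def)
qed

lemma elimination_step_correct:
  assumes step: "elimination_step N d K b" and m: "0 \<le> m" and x: "\<forall>i. x i = 0 \<or> x i = 1"
    and K: "\<forall>i \<in> set K. x i = a" and a: "a = 0 \<or> a = 1"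
    and eq: "(\<Sum>i<N. x i * horner (d ! i) m) = 0"
  shows "x b = a"
proof (rule ccontr)
  assume "x b \<noteq> a"
  let ?L = "other_indices N K b"
  let ?S = "\<Sum>i \<leftarrow> ?L. x i * horner (d ! i) m"
  have sd: "sign_definite d ?L"
    using step by (simp add: elimination_step_def)
  have "(\<Sum>i \<leftarrow> K. x i * horner (d ! i) m) = a * horner (coeffs_sum (map ((!) d) K)) m"
    using K by (simp add: sum_list_const_mult[symmetric] o_def cong: map_cong)
  then have "a * horner (coeffs_sum (map ((!) d) K)) m + x b * horner (d ! b) m + ?S = 0"
    using eq sum_split_elimination[OF step, of "\<lambda>i. x i * horner (d ! i) m"] by simp
  moreover have "horner (coeffs_sum (map ((!) d) K)) m + ?S \<noteq> 0" "horner (d ! b) m + ?S \<noteq> 0"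
    using not_cancellable_nonzero[OF m x sd, of "coeffs_sum (map ((!) d) K)"]
      not_cancellable_nonzero[OF m x sd, of "d ! b"] step
    by (simp_all add: elimination_step_def)
  ultimately show False
    using \<open>x b \<noteq> a\<close> a x[rule_format, of b] by auto
qed

fun eliminates :: "nat \<Rightarrow> int list list list \<Rightarrow> nat list \<Rightarrow> (nat \<times> nat) list \<Rightarrow> bool" where
  "eliminates N ds K [] \<longleftrightarrow> list_all (\<lambda>i. i \<in> set K) [0..<N]"
| "eliminates N ds K ((j, b) # steps) \<longleftrightarrow>
     j < length ds \<and> elimination_step N (ds ! j) K b \<and> eliminates N ds (K @ [b]) steps"

lemma eliminates_correct:
  assumes "eliminates N ds K steps" and m: "0 \<le> m" and x: "\<forall>i. x i = 0 \<or> x i = 1"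
    and "\<forall>i \<in> set K. x i = a" and a: "a = 0 \<or> a = 1"
    and eqs: "\<forall>d \<in> set ds. (\<Sum>i<N. x i * horner (d ! i) m) = 0"
  shows "\<forall>i<N. x i = a"
  using assms(1,4)
proof (induction steps arbitrary: K)
  case (Cons step steps)
  obtain j b where step: "step = (j, b)"
    by fastforce
  with Cons.prems have "j < length ds" "elimination_step N (ds ! j) K b"
    by simp_all
  then have "x b = a"
    using elimination_step_correct[OF _ m x Cons.prems(2) a] eqs[rule_format, OF nth_mem] by blast
  then show ?case
    using Cons.IH[of "K @ [b]"] Cons.prems step by simp
qed (auto simp: list_all_iff)

section \<open>Counting certificates\<close>

definition valid_certificate ::
    "(nat \<times> nat) list list \<Rightarrow> (nat \<times> nat) list \<Rightarrow> nat \<Rightarrow> (nat \<times> nat list) list list \<Rightarrow> bool" where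
  "valid_certificate G T t Ws \<longleftrightarrow>
     increasing_pairs T \<and> distinct T \<and> length T = 3 \<and> list_all (\<lambda>e. snd e < t) T \<and> t \<le> 30 \<and>
     length Ws = 5 \<and> list_all (list_all (\<lambda>w. length (snd w) \<le> 34)) Ws \<and>
     list_all (\<lambda>k. list_all2 (witness_ok G T) (extension_pairs T t k) (Ws ! k)) [0..<5]"

lemma valid_certificate_edges:
  assumes "valid_certificate G T t Ws" "34 \<le> n"
  shows "graph_of T \<in> subsets_of_card (edges {0..<n}) 3"
proof -
  have "\<forall>e \<in> set T. snd e < n"
    using assms by (auto simp: valid_certificate_def list_all_iff)
  then show ?thesis
    using assms(1) graph_of_subset_edges[of T n]
    by (simp add: valid_certificate_def subsets_of_card_def card_graph_of)
qed

text \<open>The polynomial is in m = n - 34: for n \<ge> 34 the sign conditions of the elimination then only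
  need to be checked coefficientwise.\<close>

definition count_poly :: "nat \<Rightarrow> (nat \<times> nat list) list list \<Rightarrow> nat \<Rightarrow> int list" where
  "count_poly t Ws i =
     coeffs_sum (map (\<lambda>k. map ((*) (int (count_list (map fst (Ws ! k)) i)))
       (binomial_coeffs (34 - int t) k)) [0..<5])"

lemma card_extensions_certified:
  assumes F: "vertex_symmetric n F" "F \<subseteq> Pow (edges {0..<n})" and n: "34 \<le> n"
    and C: "valid_certificate G T t Ws" and G: "\<forall>i < length G. graph_of (G ! i) \<subseteq> edges {0..<n}"
    and k: "k < 5"
  shows "int (card {P \<in> extensions n 2 (graph_of T) t {t..<t+k}. graph_of T \<union> P \<in> F})
    = (\<Sum>i < length G. int (count_list (map fst (Ws ! k)) i) * of_bool (graph_of (G ! i) \<in> F))"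
proof -
  have "Ws ! k \<in> set Ws"
    using C k by (simp add: valid_certificate_def)
  then have "list_all2 (witness_ok G T) (extension_pairs T t k) (Ws ! k)"
    "\<forall>w \<in> set (Ws ! k). length (snd w) \<le> n"
    using C k n by (fastforce simp: valid_certificate_def list_all_iff)+
  moreover have "card {P \<in> extensions n 2 (graph_of T) t {t..<t+k}. graph_of T \<union> P \<in> F}
      = length (filter (\<lambda>q. graph_of T \<union> pair_graph q \<in> F) (extension_pairs T t k))"
    using C k n by (intro card_extensions_eq_length) (auto simp: valid_certificate_def)
  ultimately show ?thesis
    using length_filter_witnessed[OF F _ _ G] by simp
qed

lemma card_supersets_count_poly:
  assumes F: "F \<subseteq> subsets_of_card (edges {0..<n}) 5" "vertex_symmetric n F" and n: "34 \<le> n"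
    and C: "valid_certificate G T t Ws" and G: "\<forall>i < length G. graph_of (G ! i) \<subseteq> edges {0..<n}"
  shows "24 * int (card {g \<in> F. graph_of T \<subseteq> g})
    = (\<Sum>i < length G. of_bool (graph_of (G ! i) \<in> F) * horner (count_poly t Ws i) (int n - 34))"
proof -
  define x where "x i = (of_bool (graph_of (G ! i) \<in> F) :: int)" for i
  define m where "m = int n - 34"
  define cnt where "cnt k i = int (count_list (map fst (Ws ! k)) i)" for k i
  define ext where "ext k = card {P \<in> extensions n 2 (graph_of T) t {t..<t+k}. graph_of T \<union> P \<in> F}" for k
  have T: "card (graph_of T) = 3" and t: "t \<le> 30"
    using C by (auto simp: valid_certificate_def card_graph_of)
  have TE: "graph_of T \<subseteq> edges {0..<t}"
    using C by (intro graph_of_subset_edges) (auto simp: valid_certificate_def list_all_iff)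
  have FE: "F \<subseteq> Pow (edges {0..<n})"
    using F(1) by (auto simp: subsets_of_card_def)
  have ext: "int (ext k) = (\<Sum>i < length G. cnt k i * x i)" if "k < 5" for k
    using card_extensions_certified[OF F(2) FE n C G that] by (simp add: ext_def cnt_def x_def)
  have bin: "24 * int (n - t choose k) = horner (binomial_coeffs (34 - int t) k) m" if "k < 5" for k
    using that t n by (subst horner_binomial_coeffs[where a = "n - t"]) (simp_all add: m_def)
  have "{..4} = {..<5::nat}"
    by auto
  then have "card {g \<in> F. graph_of T \<subseteq> g} = (\<Sum>k<5. (n - t choose k) * ext k)"
    using card_supersets_sum[OF F TE] t n by (simp add: T ext_def)
  then have "24 * int (card {g \<in> F. graph_of T \<subseteq> g}) = (\<Sum>k<5. (24 * int (n - t choose k)) * int (ext k))"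
    by (simp add: sum_distrib_left mult.assoc)
  also have "\<dots> = (\<Sum>k<5. \<Sum>i < length G. x i * (cnt k i * horner (binomial_coeffs (34 - int t) k) m))"
    by (rule sum.cong[OF refl]) (simp add: bin[symmetric] ext sum_distrib_left mult_ac)
  also have "\<dots> = (\<Sum>i < length G. x i * horner (count_poly t Ws i) m)"
    by (subst sum.swap) (simp add: count_poly_def cnt_def sum_distrib_left o_def
        atLeast0LessThan sum_set_upt_conv_sum_list_nat[symmetric])
  finally show ?thesis
    by (simp add: x_def m_def)
qed

definition poly_difference ::
    "nat \<Rightarrow> nat \<Rightarrow> (nat \<times> nat list) list list \<Rightarrow> nat \<Rightarrow> (nat \<times> nat list) list list \<Rightarrow> int list list" where
  "poly_difference N t Ws t' Ws' =
     map (\<lambda>i. coeffs_add (count_poly t Ws i) (map uminus (count_poly t' Ws' i))) [0..<N]"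

lemma sum_horner_poly_difference:
  "(\<Sum>i<N. x i * horner (poly_difference N t Ws t' Ws' ! i) m)
     = (\<Sum>i<N. x i * horner (count_poly t Ws i) m) - (\<Sum>i<N. x i * horner (count_poly t' Ws' i) m)"
  by (simp add: poly_difference_def sum_subtractf[symmetric] right_diff_distrib)

text \<open>Representatives of the 26 isomorphism types of graphs with five edges, as edge lists on the
  vertices 0, ..., 9.\<close>

definition graph_types :: "(nat \<times> nat) list list" where
  "graph_types = [
    [(0,1),(2,3),(4,5),(6,7),(8,9)],[(0,1),(2,3),(4,5),(6,7),(6,8)],
    [(0,1),(2,3),(4,5),(4,6),(5,6)],[(0,1),(2,3),(4,5),(4,6),(4,7)],
    [(0,1),(2,3),(4,5),(4,6),(5,7)],[(0,1),(2,3),(2,4),(5,6),(5,7)],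
    [(0,1),(2,3),(2,4),(2,5),(3,4)],[(0,1),(2,3),(2,4),(3,5),(4,5)],
    [(0,1),(2,3),(2,4),(2,5),(2,6)],[(0,1),(2,3),(2,4),(2,5),(3,6)],
    [(0,1),(2,3),(2,4),(3,5),(4,6)],[(0,1),(0,2),(3,4),(3,5),(4,5)],
    [(0,1),(0,2),(3,4),(3,5),(3,6)],[(0,1),(0,2),(3,4),(3,5),(4,6)],
    [(0,1),(0,2),(0,3),(1,2),(1,3)],[(0,1),(0,2),(0,3),(0,4),(1,2)],
    [(0,1),(0,2),(0,3),(1,2),(1,4)],[(0,1),(0,2),(0,3),(1,2),(3,4)],
    [(0,1),(0,2),(0,3),(1,4),(2,4)],[(0,1),(0,2),(1,3),(2,4),(3,4)],
    [(0,1),(0,2),(0,3),(0,4),(0,5)],[(0,1),(0,2),(0,3),(0,4),(1,5)],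
    [(0,1),(0,2),(0,3),(1,4),(1,5)],[(0,1),(0,2),(0,3),(1,4),(2,5)],
    [(0,1),(0,2),(0,3),(1,4),(4,5)],[(0,1),(0,2),(1,3),(2,4),(3,5)]]"

lemma length_graph_types: "length graph_types = 26"
  by (simp add: graph_types_def)

lemma graph_types_edges:
  assumes "10 \<le> n" "i < length graph_types"
  shows "graph_of (graph_types ! i) \<in> subsets_of_card (edges {0..<n}) 5"
proof -
  have "list_all (\<lambda>l. increasing_pairs l \<and> distinct l \<and> length l = 5 \<and> list_all (\<lambda>e. snd e < 10) l)
      graph_types"
    by code_simp
  then have "increasing_pairs l \<and> distinct l \<and> length l = 5 \<and> (\<forall>e \<in> set l. snd e < n)"
    if "l \<in> set graph_types" for l
    using that assms(1) by (fastforce simp: list_all_iff)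
  then show ?thesis
    using nth_mem[OF assms(2)] graph_of_subset_edges[of "graph_types ! i" n]
    by (simp add: subsets_of_card_def card_graph_of)
qed

definition claw :: "(nat \<times> nat) list" where
  "claw = [(0,1),(0,2),(0,3)]"

definition path_and_edge :: "(nat \<times> nat) list" where
  "path_and_edge = [(0,1),(1,2),(3,4)]"

definition matching :: "(nat \<times> nat) list" where
  "matching = [(0,1),(2,3),(4,5)]"

text \<open>The k-th list of a certificate has one entry (i, p) for each pair in extension_pairs T t k: the
  permutation p of the first length p vertices maps graph_types ! i onto T extended by that pair.\<close>

definition claw_witnesses :: "(nat \<times> nat list) list list" where
  "claw_witnesses = [
    [(14,[]),(14,[0,2,1]),(14,[0,3,1,2])],
    [(15,[]),(16,[]),(16,[0,2,1]),(17,[]),(15,[0,1,3,2]),(16,[0,1,3,2]),(17,[0,1,3,2]),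
     (16,[0,3,1,2]),(15,[0,2,3,1]),(17,[0,2,3,1]),(16,[0,2,3,1]),(16,[0,3,2,1]),
     (15,[0,1,4,2,3]),(15,[0,2,4,1,3]),(15,[0,3,4,1,2]),(18,[]),(18,[0,1,3,2]),(18,[0,2,3,1])],
    [(6,[4,5,0,1,2,3]),(6,[4,5,0,1,3,2]),(6,[4,5,0,2,3,1]),(20,[]),(21,[]),(21,[0,2,1]),
     (21,[0,3,1,2]),(21,[0,4,1,2,3]),(21,[0,1,2,3,5,4]),(22,[]),(23,[]),(23,[0,1,3,2]),(24,[]),
     (21,[0,2,1,3,5,4]),(23,[0,1,2,3,5,4]),(22,[0,2,1]),(23,[0,2,3,1]),(24,[0,2,1]),
     (21,[0,3,1,2,5,4]),(23,[0,1,3,2,5,4]),(23,[0,2,3,1,5,4]),(22,[0,3,1,2]),(24,[0,3,1,2]),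
     (21,[0,5,1,2,3,4]),(24,[0,1,2,3,5,4]),(24,[0,2,1,3,5,4]),(24,[0,3,1,2,5,4])],
    [(8,[5,6,0,1,2,3,4]),(9,[5,6,0,1,2,3,4]),(9,[5,6,0,2,1,3,4]),(9,[5,6,0,3,1,2,4]),
     (8,[4,6,0,1,2,3,5]),(9,[4,6,0,1,2,3,5]),(9,[4,6,0,2,1,3,5]),(9,[4,6,0,3,1,2,5]),
     (8,[4,5,0,1,2,3]),(9,[4,5,0,1,2,3]),(9,[4,5,0,2,1,3]),(9,[4,5,0,3,1,2]),
     (12,[4,5,6,0,1,2,3]),(12,[5,4,6,0,1,2,3]),(12,[6,4,5,0,1,2,3])],
    [(3,[4,5,6,7,0,1,2,3]),(3,[4,6,5,7,0,1,2,3]),(3,[4,7,5,6,0,1,2,3])]]"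

definition path_and_edge_witnesses :: "(nat \<times> nat list) list list" where
  "path_and_edge_witnesses = [
    [(17,[]),(17,[1,0]),(17,[2,0,1]),(17,[0,1,2,4,3]),(17,[1,0,2,4,3]),(17,[2,0,1,4,3]),
     (16,[1,3,0,2]),(18,[3,0,2,4,1]),(17,[0,3,4,1,2]),(18,[1,0,4,2,3]),(19,[0,1,3,2]),
     (16,[1,3,2,0]),(18,[1,0,3,2]),(15,[1,3,4,0,2]),(18,[1,2,3,0]),(19,[0,1,4,2,3]),
     (18,[1,2,4,0,3]),(17,[2,3,4,1,0]),(16,[1,4,0,2,3]),(18,[4,0,2,3,1]),(16,[1,4,2,0,3])],
    [(6,[3,4,0,1,2]),(6,[3,4,1,0,2]),(6,[3,4,2,0,1]),(11,[3,4,5,0,1,2]),(11,[4,3,5,0,1,2]),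
     (23,[0,1,3,5,2,4]),(24,[1,0,2,5,3,4]),(25,[0,1,3,2]),(24,[3,0,4,5,1,2]),(25,[0,3,1,4,2]),
     (23,[1,0,3,2,5,4]),(21,[1,3,0,2,5,4]),(23,[1,2,3,0,5,4]),(22,[1,3,0,2]),(24,[1,3,0,2]),
     (25,[1,2,0,3,5,4]),(24,[1,2,0,5,3,4]),(23,[2,1,3,5,0,4]),(24,[3,2,4,5,1,0]),
     (25,[2,3,1,4,0]),(23,[0,1,4,5,2,3]),(24,[1,0,2,5,4,3]),(25,[0,1,4,2,3]),(25,[0,4,1,3,2]),
     (24,[4,0,3,5,1,2]),(23,[1,0,4,2,5,3]),(21,[1,4,0,2,5,3]),(23,[1,2,4,0,5,3]),
     (24,[1,4,0,2,3]),(22,[1,4,0,2,3]),(25,[1,2,0,4,5,3]),(24,[1,2,0,5,4,3]),(23,[2,1,4,5,0,3]),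
     (25,[2,4,1,3,0]),(24,[4,2,3,5,1,0]),(6,[3,4,1,0,5,2]),(7,[3,4,0,1,5,2]),(25,[0,5,1,3,2,4]),
     (25,[0,5,1,4,2,3]),(6,[3,4,1,2,5,0]),(24,[1,5,0,2,3,4]),(24,[1,5,0,2,4,3]),
     (25,[2,5,1,3,0,4]),(25,[2,5,1,4,0,3]),(11,[1,0])],
    [(2,[3,4,5,6,0,1,2]),(10,[5,6,0,1,3,2,4]),(9,[5,6,1,3,0,2,4]),(10,[5,6,2,1,3,0,4]),
     (10,[5,6,0,1,4,2,3]),(9,[5,6,1,4,0,2,3]),(10,[5,6,2,1,4,0,3]),(9,[3,4,0,1,5,6,2]),
     (9,[3,4,1,0,2,6,5]),(10,[3,4,1,0,2]),(13,[3,4,6,0,1,5,2]),(13,[4,3,6,0,1,5,2]),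
     (10,[3,4,0,1,5,2]),(9,[3,4,1,0,2]),(8,[3,4,1,0,2]),(9,[3,4,1,2,0]),(12,[3,4,6,1,0,2,5]),
     (12,[4,3,6,1,0,2,5]),(9,[3,4,1,5,0,2]),(10,[3,4,1,0,2,6,5]),(9,[3,4,1,2,0,6,5]),
     (9,[3,4,2,1,5,6,0]),(13,[3,4,6,1,2,0,5]),(13,[4,3,6,1,2,0,5]),(10,[3,4,2,1,5,0]),
     (13,[3,4,5,0,1,6,2]),(12,[3,4,5,1,0,2]),(13,[3,4,5,1,2,0]),(12,[1,0]),(13,[1,0]),
     (13,[1,0,2,3,5,4]),(13,[4,3,5,0,1,6,2]),(12,[4,3,5,1,0,2]),(13,[4,3,5,1,2,0]),
     (13,[1,0,2,3,4,6,5]),(12,[1,0,2,4,3]),(13,[1,0,2,4,5,3]),(10,[3,4,0,1,6,2,5]),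
     (9,[3,4,1,6,0,2,5]),(10,[3,4,2,1,6,0,5]),(13,[1,0,2,3,6,4,5]),(13,[1,0,2,4,6,3,5])],
    [(4,[3,4,6,7,0,1,5,2]),(3,[3,4,6,7,1,0,2,5]),(4,[3,4,6,7,1,2,0,5]),(5,[6,7,1,0,2,3,4,5]),
     (5,[6,7,1,0,2,4,3,5]),(4,[3,4,5,7,0,1,6,2]),(3,[3,4,5,7,1,0,2,6]),(4,[3,4,5,7,1,2,0,6]),
     (5,[5,7,1,0,2,3,4,6]),(5,[5,7,1,0,2,4,3,6]),(4,[3,4,5,6,0,1,7,2]),(3,[3,4,5,6,1,0,2]),
     (4,[3,4,5,6,1,2,0]),(5,[5,6,1,0,2,3,4]),(5,[5,6,1,0,2,4,3]),(5,[3,4,1,0,2]),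
     (5,[3,4,1,0,2,6,5]),(5,[3,4,1,0,2,7,5,6])],
    [(1,[3,4,5,6,7,8,1,0,2]),(1,[3,4,5,7,6,8,1,0,2]),(1,[3,4,5,8,6,7,1,0,2])]]"

definition matching_witnesses :: "(nat \<times> nat list) list list" where
  "matching_witnesses = [
    [(6,[4,5,2,0,1,3]),(6,[4,5,0,2,3,1]),(7,[4,5,0,1,2,3]),(23,[0,2,4,1,3]),(25,[0,1,2,4,3]),
     (23,[2,0,4,3,1]),(25,[2,3,0,4,1]),(23,[0,2,5,1,3,4]),(25,[0,1,2,5,3,4]),(23,[2,0,5,3,1,4]),
     (25,[2,3,0,5,1,4]),(7,[4,5,0,1,3,2]),(6,[4,5,1,2,3,0]),(25,[0,1,4,2,5,3]),(23,[1,2,4,0,3]),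
     (23,[2,1,4,3,0]),(25,[2,3,1,4,0]),(25,[0,1,5,2,4,3]),(23,[1,2,5,0,3,4]),(23,[2,1,5,3,0,4]),
     (25,[2,3,1,5,0,4]),(6,[4,5,3,0,1,2]),(23,[0,3,4,1,2]),(25,[0,1,3,4,2]),(25,[2,3,4,0,5,1]),
     (23,[3,0,4,2,1]),(23,[0,3,5,1,2,4]),(25,[0,1,3,5,2,4]),(25,[2,3,5,0,4,1]),
     (23,[3,0,5,2,1,4]),(25,[0,1,4,3,5,2]),(23,[1,3,4,0,2]),(25,[2,3,4,1,5,0]),(23,[3,1,4,2,0]),
     (25,[0,1,5,3,4,2]),(23,[1,3,5,0,2,4]),(25,[2,3,5,1,4,0]),(23,[3,1,5,2,0,4]),
     (6,[2,3,4,0,1]),(23,[4,0,2,5,1,3]),(23,[4,0,3,5,1,2]),(6,[2,3,0,4,5,1]),(7,[2,3,0,1]),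
     (25,[4,5,0,2,1,3]),(25,[4,5,0,3,1,2]),(23,[4,1,2,5,0,3]),(23,[4,1,3,5,0,2]),
     (7,[2,3,0,1,5,4]),(6,[2,3,1,4,5,0]),(25,[4,5,1,2,0,3]),(25,[4,5,1,3,0,2]),(6,[0,1,4,2,3]),
     (25,[4,5,2,0,3,1]),(25,[4,5,2,1,3,0]),(6,[0,1,2,4,5,3]),(7,[]),(25,[4,5,3,0,2,1]),
     (25,[4,5,3,1,2,0]),(7,[0,1,2,3,5,4]),(6,[0,1,3,4,5,2]),(6,[2,3,5,0,1,4]),
     (23,[5,0,2,4,1,3]),(23,[5,0,3,4,1,2]),(23,[5,1,2,4,0,3]),(23,[5,1,3,4,0,2]),
     (6,[0,1,5,2,3,4])],
    [(9,[4,5,0,2,1,6,3]),(10,[4,5,0,1,2,6,3]),(9,[4,5,2,0,3,6,1]),(10,[4,5,2,0,3,1]),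
     (13,[4,5,6,0,2,1,3]),(13,[5,4,6,0,2,1,3]),(10,[4,5,1,0,2,6,3]),(9,[4,5,1,2,0,6,3]),
     (9,[4,5,2,1,3,6,0]),(10,[4,5,2,1,3,0]),(13,[4,5,6,1,2,0,3]),(13,[5,4,6,1,2,0,3]),
     (9,[4,5,0,3,1,6,2]),(10,[4,5,0,1,3,6,2]),(10,[4,5,3,0,2,1]),(9,[4,5,3,0,2,6,1]),
     (13,[4,5,6,0,3,1,2]),(13,[5,4,6,0,3,1,2]),(10,[4,5,1,0,3,6,2]),(9,[4,5,1,3,0,6,2]),
     (10,[4,5,3,1,2,0]),(9,[4,5,3,1,2,6,0]),(13,[4,5,6,1,3,0,2]),(13,[5,4,6,1,3,0,2]),
     (9,[2,3,0,4,1,6,5]),(10,[2,3,0,1,4,6,5]),(13,[2,3,6,0,4,1,5]),(13,[3,2,6,0,4,1,5]),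
     (9,[2,3,4,0,5,6,1]),(10,[2,3,4,0,5,1]),(10,[2,3,1,0,4,6,5]),(9,[2,3,1,4,0,6,5]),
     (13,[2,3,6,1,4,0,5]),(13,[3,2,6,1,4,0,5]),(9,[2,3,4,1,5,6,0]),(10,[2,3,4,1,5,0]),
     (13,[0,1,6,2,4,3,5]),(13,[1,0,6,2,4,3,5]),(9,[0,1,2,4,3,6,5]),(10,[0,1,2,3,4,6,5]),
     (9,[0,1,4,2,5,6,3]),(10,[0,1,4,2,5,3]),(13,[0,1,6,3,4,2,5]),(13,[1,0,6,3,4,2,5]),
     (10,[0,1,3,2,4,6,5]),(9,[0,1,3,4,2,6,5]),(9,[0,1,4,3,5,6,2]),(10,[0,1,4,3,5,2]),
     (9,[2,3,0,5,1,6,4]),(10,[2,3,0,1,5,6,4]),(13,[2,3,6,0,5,1,4]),(13,[3,2,6,0,5,1,4]),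
     (10,[2,3,5,0,4,1]),(9,[2,3,5,0,4,6,1]),(10,[2,3,1,0,5,6,4]),(9,[2,3,1,5,0,6,4]),
     (13,[2,3,6,1,5,0,4]),(13,[3,2,6,1,5,0,4]),(10,[2,3,5,1,4,0]),(9,[2,3,5,1,4,6,0]),
     (13,[0,1,6,2,5,3,4]),(13,[1,0,6,2,5,3,4]),(9,[0,1,2,5,3,6,4]),(10,[0,1,2,3,5,6,4]),
     (10,[0,1,5,2,4,3]),(9,[0,1,5,2,4,6,3]),(13,[0,1,6,3,5,2,4]),(13,[1,0,6,3,5,2,4]),
     (10,[0,1,3,2,5,6,4]),(9,[0,1,3,5,2,6,4]),(10,[0,1,5,3,4,2]),(9,[0,1,5,3,4,6,2]),
     (2,[2,3,4,5,0,1]),(10,[4,5,6,0,2,1,3]),(10,[4,5,6,0,3,1,2]),(10,[2,3,6,0,4,1,5]),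
     (10,[2,3,6,0,5,1,4]),(10,[4,5,6,1,2,0,3]),(10,[4,5,6,1,3,0,2]),(10,[2,3,6,1,4,0,5]),
     (10,[2,3,6,1,5,0,4]),(2,[0,1,4,5,2,3]),(10,[0,1,6,2,4,3,5]),(10,[0,1,6,2,5,3,4]),
     (10,[0,1,6,3,4,2,5]),(10,[0,1,6,3,5,2,4]),(2,[])],
    [(4,[4,5,6,7,0,2,1,3]),(4,[4,5,6,7,1,2,0,3]),(4,[4,5,6,7,0,3,1,2]),(4,[4,5,6,7,1,3,0,2]),
     (4,[2,3,6,7,0,4,1,5]),(4,[2,3,6,7,1,4,0,5]),(4,[0,1,6,7,2,4,3,5]),(4,[0,1,6,7,3,4,2,5]),
     (4,[2,3,6,7,0,5,1,4]),(4,[2,3,6,7,1,5,0,4]),(4,[0,1,6,7,2,5,3,4]),(4,[0,1,6,7,3,5,2,4]),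
     (3,[2,3,4,5,0,1]),(4,[2,3,4,5,0,1]),(5,[4,5,0,1,6,2,3]),(5,[4,5,0,1,6,3,2]),
     (5,[2,3,0,1,6,4,5]),(5,[2,3,0,1,6,5,4]),(4,[2,3,4,5,0,6,1]),(4,[2,3,4,5,0,1,7,6]),
     (3,[2,3,4,5,1,0]),(5,[4,5,1,0,6,2,3]),(5,[4,5,1,0,6,3,2]),(5,[2,3,1,0,6,4,5]),
     (5,[2,3,1,0,6,5,4]),(4,[2,3,4,5,1,6,0]),(5,[4,5,0,1,7,2,3,6]),(5,[4,5,1,0,7,2,3,6]),
     (3,[0,1,4,5,2,3]),(4,[0,1,4,5,2,3]),(5,[0,1,2,3,6,4,5]),(5,[0,1,2,3,6,5,4]),
     (4,[0,1,4,5,2,6,3]),(5,[4,5,0,1,7,3,2,6]),(5,[4,5,1,0,7,3,2,6]),(4,[0,1,4,5,2,3,7,6]),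
     (3,[0,1,4,5,3,2]),(5,[0,1,3,2,6,4,5]),(5,[0,1,3,2,6,5,4]),(4,[0,1,4,5,3,6,2]),
     (5,[2,3,0,1,7,4,5,6]),(5,[2,3,1,0,7,4,5,6]),(5,[0,1,2,3,7,4,5,6]),(5,[0,1,3,2,7,4,5,6]),
     (3,[]),(4,[]),(4,[0,1,2,3,4,6,5]),(5,[2,3,0,1,7,5,4,6]),(5,[2,3,1,0,7,5,4,6]),
     (5,[0,1,2,3,7,5,4,6]),(5,[0,1,3,2,7,5,4,6]),(4,[0,1,2,3,4,5,7,6]),(3,[0,1,2,3,5,4]),
     (4,[0,1,2,3,5,6,4]),(4,[2,3,4,5,0,7,1,6]),(4,[2,3,4,5,1,7,0,6]),(4,[0,1,4,5,2,7,3,6]),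
     (4,[0,1,4,5,3,7,2,6]),(4,[0,1,2,3,4,7,5,6]),(4,[0,1,2,3,5,7,4,6])],
    [(1,[2,3,4,5,7,8,0,1,6]),(1,[2,3,4,5,7,8,1,0,6]),(1,[0,1,4,5,7,8,2,3,6]),
     (1,[0,1,4,5,7,8,3,2,6]),(1,[0,1,2,3,7,8,4,5,6]),(1,[0,1,2,3,7,8,5,4,6]),
     (1,[2,3,4,5,6,8,0,1,7]),(1,[2,3,4,5,6,8,1,0,7]),(1,[0,1,4,5,6,8,2,3,7]),
     (1,[0,1,4,5,6,8,3,2,7]),(1,[0,1,2,3,6,8,4,5,7]),(1,[0,1,2,3,6,8,5,4,7]),
     (1,[2,3,4,5,6,7,0,1]),(1,[2,3,4,5,6,7,1,0]),(1,[0,1,4,5,6,7,2,3]),(1,[0,1,4,5,6,7,3,2]),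
     (1,[0,1,2,3,6,7,4,5]),(1,[0,1,2,3,6,7,5,4]),(1,[]),(1,[0,1,2,3,4,5,7,6]),
     (1,[0,1,2,3,4,5,8,6,7])],
    [(0,[]),(0,[0,1,2,3,4,5,6,8,7]),(0,[0,1,2,3,4,5,6,9,7,8])]]"

lemma valid_certificate_claw: "valid_certificate graph_types claw 4 claw_witnesses"
  by code_simp

lemma valid_certificate_path_and_edge:
  "valid_certificate graph_types path_and_edge 5 path_and_edge_witnesses"
  by code_simp

lemma valid_certificate_matching: "valid_certificate graph_types matching 6 matching_witnesses"
  by code_simp

text \<open>Step (j, b) uses the j-th difference of count polynomials to show that class b agrees with the
  classes settled before it.\<close>

definition elimination_order :: "(nat \<times> nat) list" where
  "elimination_order = [(2,1),(2,2),(0,3),(2,4),(2,5),(2,6),(2,7),(0,8),(0,9),(2,10),(2,11),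
     (0,12),(2,13),(1,15),(1,16),(1,17),(1,18),(2,19),(0,20),(0,21),(0,22),(0,23),(0,24),(0,25),(0,14)]"

lemma elimination_certificate: "eliminates 26
    [poly_difference 26 4 claw_witnesses 5 path_and_edge_witnesses,
     poly_difference 26 4 claw_witnesses 6 matching_witnesses,
     poly_difference 26 5 path_and_edge_witnesses 6 matching_witnesses] [0] elimination_order"
  by code_simp

lemma graph_type_membership_uniform:
  assumes n: "34 \<le> n" and F: "F \<subseteq> subsets_of_card (edges {0..<n}) 5" "vertex_symmetric n F"
    and count: "\<forall>T \<in> subsets_of_card (edges {0..<n}) 3. card {g \<in> F. T \<subseteq> g} = lam"
    and i: "i < length graph_types"
  shows "graph_of (graph_types ! i) \<in> F \<longleftrightarrow> graph_of (graph_types ! 0) \<in> F"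
proof -
  define x where "x i = (of_bool (graph_of (graph_types ! i) \<in> F) :: int)" for i
  define m where "m = int n - 34"
  have G: "\<forall>i < length graph_types. graph_of (graph_types ! i) \<subseteq> edges {0..<n}"
    using graph_types_edges n by (simp add: subsets_of_card_def)
  have eq: "24 * int lam = (\<Sum>i<26. x i * horner (count_poly t Ws i) m)"
    if "valid_certificate graph_types T t Ws" for T t Ws
    using card_supersets_count_poly[OF F n that G] count valid_certificate_edges[OF that n]
    by (simp add: x_def m_def length_graph_types)
  have "\<forall>d \<in> set [poly_difference 26 4 claw_witnesses 5 path_and_edge_witnesses,
      poly_difference 26 4 claw_witnesses 6 matching_witnesses,
      poly_difference 26 5 path_and_edge_witnesses 6 matching_witnesses].
      (\<Sum>i<26. x i * horner (d ! i) m) = 0"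
    using eq[OF valid_certificate_claw] eq[OF valid_certificate_path_and_edge]
      eq[OF valid_certificate_matching] by (simp add: sum_horner_poly_difference)
  then have all: "\<forall>i<26. x i = x 0"
    using n by (intro eliminates_correct[OF elimination_certificate]) (auto simp: x_def m_def)
  have "x i = x 0"
    using all[rule_format, of i] i by (simp add: length_graph_types)
  then show ?thesis
    by (simp add: x_def of_bool_eq_iff)
qed

theorem no_vertex_symmetric_design:
  assumes n: "34 \<le> n" and lam: "0 < lam" and D: "is_design (edges {0..<n}) F 3 v 5 lam"
    and S: "vertex_symmetric n F"
  shows False
proof -
  let ?A = "subsets_of_card (edges {0..<n}) 5"
  have F: "F \<subseteq> ?A" and count: "\<forall>T \<in> subsets_of_card (edges {0..<n}) 3. card {g \<in> F. T \<subseteq> g} = lam"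
    using D by (auto simp: is_design_def)
  have G: "\<forall>i < length graph_types. graph_of (graph_types ! i) \<subseteq> edges {0..<n}"
    using graph_types_edges n by (simp add: subsets_of_card_def)
  have claw: "graph_of claw \<in> subsets_of_card (edges {0..<n}) 3"
    using valid_certificate_edges[OF valid_certificate_claw n] .
  have claw_count: "24 * int (card {g \<in> F'. graph_of claw \<subseteq> g})
      = (\<Sum>i < length graph_types.
          of_bool (graph_of (graph_types ! i) \<in> F')
          * horner (count_poly 4 claw_witnesses i) (int n - 34))"
    if "F' \<subseteq> ?A" "vertex_symmetric n F'" for F'
    using card_supersets_count_poly[OF that n valid_certificate_claw G] .
  note uniform = graph_type_membership_uniform[OF n F S count]
  show False
  proof (cases "graph_of (graph_types ! 0) \<in> F")
    case False
    then have "24 * int lam = 0"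
      using claw_count[OF F S] count claw uniform by simp
    then show False
      using lam by simp
  next
    case True
    then have "card {g \<in> F. graph_of claw \<subseteq> g} = card {g \<in> ?A. graph_of claw \<subseteq> g}"
      using claw_count[OF F S] claw_count[OF subset_refl vertex_symmetric_subsets_of_card] uniform
        graph_types_edges n by simp
    then show False
      using design_count_less_complete[OF D claw] count claw by simp
  qed
qed

theorem mainTheorem2:
  fixes n lam :: nat and V :: "'b set" and phi :: "'b set \<Rightarrow> 'a" and X :: "'a set" and B :: "'a set set"
  assumes "n \<ge> 34" and "lam > 0"
  shows "\<not> (is_design X B 3 (n choose 2) 5 lam \<and> graphical_wrt n V phi X B)"
proof
  assume "is_design X B 3 (n choose 2) 5 lam \<and> graphical_wrt n V phi X B"
  then obtain F where "is_design (edges {0..<n}) F 3 (n choose 2) 5 lam" "vertex_symmetric n F"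
    using graphical_design_vertex_symmetric by blast
  then show False
    using no_vertex_symmetric_design assms by blast
qed

end
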